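(* Let $\mathbf s=(s_i)_{i=0}^{n-1}$ define the $n\times n$ Vandermonde matrix $V=V_{\mathbf s}=(s_i^j)_{i,j=0}^{n-1}$. Write $s_+=\max_{i}|s_i|$ and $\bar\epsilon=(s_++1)\epsilon$, where $\log(1/\epsilon)=O(\log n)$, and let $\rho=O(\log(n/\epsilon))$. Then $\alpha_{\bar\epsilon}(V)+\alpha_{\bar\epsilon}(V^T)=O(n\rho\log n)$ and $\beta_{\bar\epsilon}(V)+\beta_{\bar\epsilon}(V^T)=O(n\rho^2\log n)$.
   Context: For a matrix $M$, $|M|=\max_{i,j}|m_{i,j}|$. $\alpha(M)$ (resp. $\beta(M)$) denotes the arithmetic cost (number of flops) of computing $M\mathbf u$ (resp. $M^{-1}\mathbf u$), maximized over all unit vectors $\mathbf u$ and minimized over all algorithms; $\alpha_\epsilon(M)=\min_{|E|\le\epsilon}\alpha(M+E)$ and $\beta_\epsilon(M)=\min_{|E|\le\epsilon}\beta(M+E)$. *)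

theory Defs
  imports Complex_Main "HOL-Library.Landau_Symbols" "HOL-Library.Extended_Nat"
begin

text \<open>An operand is an input coordinate, a (free) constant, or the result of an
earlier instruction. Each instruction is one flop.\<close>

datatype operand = Inp nat | Cst complex | Reg nat

datatype instr =
    Add operand operand
  | Sub operand operand
  | Mul operand operand
  | Dvd operand operand

type_synonym slp = "instr list \<times> operand list"

fun eval_operand :: "(nat \<Rightarrow> complex) \<Rightarrow> complex list \<Rightarrow> operand \<Rightarrow> complex" where
  "eval_operand u rs (Inp i) = u i"
| "eval_operand u rs (Cst c) = c"
| "eval_operand u rs (Reg j) = rs ! j"

fun eval_instr :: "(nat \<Rightarrow> complex) \<Rightarrow> complex list \<Rightarrow> instr \<Rightarrow> complex" where
  "eval_instr u rs (Add a b) = eval_operand u rs a + eval_operand u rs b"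
| "eval_instr u rs (Sub a b) = eval_operand u rs a - eval_operand u rs b"
| "eval_instr u rs (Mul a b) = eval_operand u rs a * eval_operand u rs b"
| "eval_instr u rs (Dvd a b) = eval_operand u rs a / eval_operand u rs b"

definition run :: "(nat \<Rightarrow> complex) \<Rightarrow> instr list \<Rightarrow> complex list" where
  "run u is = foldl (\<lambda>rs ins. rs @ [eval_instr u rs ins]) [] is"

definition exec :: "slp \<Rightarrow> (nat \<Rightarrow> complex) \<Rightarrow> nat \<Rightarrow> complex" where
  "exec P u i = eval_operand u (run u (fst P)) (snd P ! i)"

definition cost :: "slp \<Rightarrow> nat" where
  "cost P = length (fst P)"

type_synonym cmat = "nat \<Rightarrow> nat \<Rightarrow> complex"

definition unit_vec :: "nat \<Rightarrow> (nat \<Rightarrow> complex) \<Rightarrow> bool" where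
  "unit_vec n u \<longleftrightarrow> (\<forall>i\<ge>n. u i = 0) \<and> (\<Sum>i<n. (cmod (u i))\<^sup>2) = 1"

definition mat_vec :: "nat \<Rightarrow> cmat \<Rightarrow> (nat \<Rightarrow> complex) \<Rightarrow> nat \<Rightarrow> complex" where
  "mat_vec n M u = (\<lambda>i. \<Sum>j<n. M i j * u j)"

definition transp :: "cmat \<Rightarrow> cmat" where
  "transp M = (\<lambda>i j. M j i)"

definition is_inverse :: "nat \<Rightarrow> cmat \<Rightarrow> cmat \<Rightarrow> bool" where
  "is_inverse n M N \<longleftrightarrow>
     (\<forall>i<n. \<forall>j<n. (\<Sum>k<n. M i k * N k j) = (if i = j then 1 else 0)) \<and>
     (\<forall>i<n. \<forall>j<n. (\<Sum>k<n. N i k * M k j) = (if i = j then 1 else 0))"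

definition invertible_n :: "nat \<Rightarrow> cmat \<Rightarrow> bool" where
  "invertible_n n M \<longleftrightarrow> (\<exists>N. is_inverse n M N)"

definition mat_inv :: "nat \<Rightarrow> cmat \<Rightarrow> cmat" where
  "mat_inv n M = (SOME N. is_inverse n M N)"

definition computes :: "nat \<Rightarrow> ((nat \<Rightarrow> complex) \<Rightarrow> nat \<Rightarrow> complex) \<Rightarrow> slp \<Rightarrow> bool" where
  "computes n f P \<longleftrightarrow> length (snd P) = n \<and>
     (\<forall>u. unit_vec n u \<longrightarrow> (\<forall>i<n. exec P u i = f u i))"

definition alpha :: "nat \<Rightarrow> cmat \<Rightarrow> enat" where
  "alpha n M = Inf {enat (cost P) | P. computes n (mat_vec n M) P}"

definition beta :: "nat \<Rightarrow> cmat \<Rightarrow> enat" where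
  "beta n M = (if invertible_n n M
     then Inf {enat (cost P) | P. computes n (mat_vec n (mat_inv n M)) P}
     else \<infinity>)"

definition mat_add :: "cmat \<Rightarrow> cmat \<Rightarrow> cmat" where
  "mat_add M E = (\<lambda>i j. M i j + E i j)"

definition alpha_eps :: "nat \<Rightarrow> real \<Rightarrow> cmat \<Rightarrow> enat" where
  "alpha_eps n e M = Inf {alpha n (mat_add M E) | E. \<forall>i<n. \<forall>j<n. cmod (E i j) \<le> e}"

definition beta_eps :: "nat \<Rightarrow> real \<Rightarrow> cmat \<Rightarrow> enat" where
  "beta_eps n e M = Inf {beta n (mat_add M E) | E. \<forall>i<n. \<forall>j<n. cmod (E i j) \<le> e}"

definition vandermonde :: "(nat \<Rightarrow> complex) \<Rightarrow> cmat" where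
  "vandermonde s = (\<lambda>i j. s i ^ j)"

definition s_plus :: "nat \<Rightarrow> (nat \<Rightarrow> complex) \<Rightarrow> real" where
  "s_plus n s = Max {cmod (s i) | i. i < n}"

end

theory Submission
  imports Defs "HOL-Library.Real_Mod" "HOL-Computational_Algebra.Polynomial"
begin

text \<open>
  Exact Vandermonde products cost \<open>O(n log\<^sup>2 n)\<close> flops once the nodes are pairwise
  distinct and nonzero: \<open>V u\<close> is multipoint evaluation down a subproduct tree;
  \<open>V\<^sup>T u\<close> is the truncation modulo \<open>x\<^sup>n\<close> of the series \<open>\<Sum>\<^sub>i u\<^sub>i / (1 - t\<^sub>i x)\<close>, whose
  numerator over \<open>\<Prod>\<^sub>i (1 - t\<^sub>i x)\<close> is again a tree sum; the inverses are Lagrange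
  interpolation and its transpose. All polynomial products use the FFT.
  The allowed entrywise error \<open>(s\<^sub>+ + 1)\<epsilon>\<close> is positive, and an arbitrarily small
  perturbation of the nodes \<open>s\<^sub>i\<close> makes them distinct and nonzero. Finally
  \<open>log\<^sup>2 n \<le> \<rho> log n\<close> because \<open>\<rho> = log (n/\<epsilon>) \<ge> log n\<close>.
\<close>

section \<open>Straight-line programs as a cost calculus\<close>

definition outputs_in_range :: "slp \<Rightarrow> bool" where
  "outputs_in_range P \<longleftrightarrow> (\<forall>z\<in>set (snd P). \<forall>r. z = Reg r \<longrightarrow> r < length (fst P))"

text \<open>Requiring the outputs to name only executed
  registers is what makes such programs composable. Constants are free, so anything
  depending only on the matrix may be hard-wired into the program.\<close>
definition realizable :: "nat \<Rightarrow> nat \<Rightarrow> nat \<Rightarrow> (complex list \<Rightarrow> complex list) \<Rightarrow> bool" where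
  "realizable n m c f \<longleftrightarrow> (\<forall>xs. length xs = n \<longrightarrow> length (f xs) = m) \<and>
     (\<exists>P. cost P \<le> c \<and> length (snd P) = m \<and> outputs_in_range P \<and>
        (\<forall>u. \<forall>i<m. exec P u i = f (map u [0..<n]) ! i))"

lemma run_Nil[simp]: "run u [] = []" by (simp add: run_def)

lemma run_snoc[simp]: "run u (is @ [x]) = run u is @ [eval_instr u (run u is) x]"
  by (simp add: run_def)

lemma length_run[simp]: "length (run u is) = length is"
  by (induction "is" rule: rev_induct) auto

text \<open>To append a program after \<open>L\<close> instructions, its inputs are replaced by the
  operands \<open>\<iota> j\<close> and its registers shifted by \<open>L\<close>.\<close>
fun relocate_operand :: "(nat \<Rightarrow> operand) \<Rightarrow> nat \<Rightarrow> operand \<Rightarrow> operand" where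
  "relocate_operand \<iota> L (Inp j) = \<iota> j"
| "relocate_operand \<iota> L (Cst c) = Cst c"
| "relocate_operand \<iota> L (Reg j) = Reg (j + L)"

fun map_instr :: "(operand \<Rightarrow> operand) \<Rightarrow> instr \<Rightarrow> instr" where
  "map_instr g (Add a b) = Add (g a) (g b)"
| "map_instr g (Sub a b) = Sub (g a) (g b)"
| "map_instr g (Mul a b) = Mul (g a) (g b)"
| "map_instr g (Dvd a b) = Dvd (g a) (g b)"

lemma eval_relocate_operand:
  assumes "\<And>j R2. eval_operand u (R1 @ R2) (\<iota> j) = u' j" "length R1 = L"
  shows "eval_operand u (R1 @ R2) (relocate_operand \<iota> L z) = eval_operand u' R2 z"
  using assms by (cases z) (auto simp: nth_append)

lemma eval_map_instr:
  assumes "\<And>j R2. eval_operand u (R1 @ R2) (\<iota> j) = u' j" "length R1 = L"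
  shows "eval_instr u (R1 @ R2) (map_instr (relocate_operand \<iota> L) ins) = eval_instr u' R2 ins"
  using assms by (cases ins) (auto simp: eval_relocate_operand)

lemma run_append_relocated:
  assumes "\<And>j R2. eval_operand u (run u is1 @ R2) (\<iota> j) = u' j"
  shows "run u (is1 @ map (map_instr (relocate_operand \<iota> (length is1))) is2) = run u is1 @ run u' is2"
proof (induction is2 rule: rev_induct)
  case Nil thus ?case by simp
next
  case (snoc x xs)
  let ?\<sigma> = "map_instr (relocate_operand \<iota> (length is1))"
  have "run u (is1 @ map ?\<sigma> (xs @ [x])) =
        run u (is1 @ map ?\<sigma> xs) @ [eval_instr u (run u (is1 @ map ?\<sigma> xs)) (?\<sigma> x)]"
    by (metis append_assoc list.simps(8,9) map_append run_snoc)
  also have "\<dots> = run u is1 @ run u' xs @ [eval_instr u' (run u' xs) x]"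
    using snoc eval_map_instr[of u "run u is1" \<iota> u' "length is1" "run u' xs" x] assms
    by simp
  finally show ?case by simp
qed

lemma eval_output_append:
  assumes "outputs_in_range P" "i < length (snd P)"
  shows "eval_operand u (run u (fst P) @ R2) (snd P ! i) = exec P u i"
proof -
  have "\<forall>r. snd P ! i = Reg r \<longrightarrow> r < length (fst P)"
    using assms nth_mem unfolding outputs_in_range_def by blast
  then show ?thesis unfolding exec_def by (cases "snd P ! i") (auto simp: nth_append)
qed

lemma outputs_in_range_relocated:
  assumes "outputs_in_range Q" "\<And>j r. \<iota> j = Reg r \<Longrightarrow> r < L"
    and "z \<in> set (snd Q)" "relocate_operand \<iota> L z = Reg r"
  shows "r < L + length (fst Q)"
  using assms unfolding outputs_in_range_def
  by (cases z) (auto, metis add_less_mono1 add.commute trans_less_add2)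

lemma realizable_length: "realizable n m c f \<Longrightarrow> length xs = n \<Longrightarrow> length (f xs) = m"
  by (simp add: realizable_def)

lemma realizable_cong:
  assumes "realizable n m c f" "\<And>xs. length xs = n \<Longrightarrow> g xs = f xs" "c \<le> c'"
  shows "realizable n m c' g"
proof -
  obtain P where P: "cost P \<le> c" "length (snd P) = m" "outputs_in_range P"
    "\<And>u i. i < m \<Longrightarrow> exec P u i = f (map u [0..<n]) ! i"
    using assms(1) unfolding realizable_def by blast
  show ?thesis unfolding realizable_def
  proof (intro conjI exI allI impI)
    show "length (g xs) = m" if "length xs = n" for xs using that assms(1,2) by (simp add: realizable_length)
    show "cost P \<le> c'" using P(1) assms(3) by simp
    show "exec P u i = g (map u [0..<n]) ! i" if "i < m" for u i
      using P(4)[OF that] assms(2)[of "map u [0..<n]"] by simp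
  qed (use P in auto)
qed

lemma realizable_mono: "realizable n m c f \<Longrightarrow> c \<le> c' \<Longrightarrow> realizable n m c' f"
  using realizable_cong by blast

lemma realizable_comp:
  assumes f: "realizable n m a f" and g: "realizable m k b g"
  shows "realizable n k (a + b) (\<lambda>xs. g (f xs))"
proof -
  obtain P where P: "cost P \<le> a" "length (snd P) = m" "outputs_in_range P"
    "\<And>u i. i < m \<Longrightarrow> exec P u i = f (map u [0..<n]) ! i"
    using f unfolding realizable_def by blast
  obtain Q where Q: "cost Q \<le> b" "length (snd Q) = k" "outputs_in_range Q"
    "\<And>u i. i < k \<Longrightarrow> exec Q u i = g (map u [0..<m]) ! i"
    using g unfolding realizable_def by blast
  define \<iota> where "\<iota> j = (if j < m then snd P ! j else Cst 0)" for j
  define \<sigma> where "\<sigma> = relocate_operand \<iota> (length (fst P))"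
  define R where "R = (fst P @ map (map_instr \<sigma>) (fst Q), map \<sigma> (snd Q))"
  define u' where "u' u = (\<lambda>j. if j < m then exec P u j else 0)" for u
  have \<iota>: "eval_operand u (run u (fst P) @ R2) (\<iota> j) = u' u j" for u j R2
    using eval_output_append[OF P(3)] P(2) by (simp add: \<iota>_def u'_def)
  have runR: "run u (fst R) = run u (fst P) @ run (u' u) (fst Q)" for u
    unfolding R_def \<sigma>_def using run_append_relocated[of u "fst P" \<iota>, OF \<iota>] by simp
  have \<iota>_range: "r < length (fst P)" if "\<iota> j = Reg r" for j r
    using that P(2,3) nth_mem unfolding \<iota>_def outputs_in_range_def by (fastforce split: if_splits)
  have u': "map (u' u) [0..<m] = f (map u [0..<n])" for u
    using P(4) realizable_length[OF f] by (intro nth_equalityI) (auto simp: u'_def)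
  show ?thesis unfolding realizable_def
  proof (intro conjI exI allI impI)
    show "length (g (f xs)) = k" if "length xs = n" for xs
      using that f g by (simp add: realizable_length)
    show "cost R \<le> a + b" using P(1) Q(1) by (simp add: R_def cost_def)
    show "length (snd R) = k" using Q(2) by (simp add: R_def)
    show "outputs_in_range R" unfolding outputs_in_range_def R_def \<sigma>_def
      using outputs_in_range_relocated[OF Q(3) \<iota>_range] by auto
  next
    fix u i assume i: "i < k"
    have "exec R u i = eval_operand u (run u (fst P) @ run (u' u) (fst Q)) (\<sigma> (snd Q ! i))"
      using i Q(2) runR unfolding exec_def R_def by simp
    also have "\<dots> = exec Q (u' u) i"
      unfolding \<sigma>_def exec_def by (rule eval_relocate_operand) (use \<iota> in auto)
    finally show "exec R u i = g (f (map u [0..<n])) ! i" using Q(4)[OF i] u' by simp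
  qed
qed

lemma realizable_append:
  assumes f: "realizable n m a f" and g: "realizable n k b g"
  shows "realizable n (m + k) (a + b) (\<lambda>xs. f xs @ g xs)"
proof -
  obtain P where P: "cost P \<le> a" "length (snd P) = m" "outputs_in_range P"
    "\<And>u i. i < m \<Longrightarrow> exec P u i = f (map u [0..<n]) ! i"
    using f unfolding realizable_def by blast
  obtain Q where Q: "cost Q \<le> b" "length (snd Q) = k" "outputs_in_range Q"
    "\<And>u i. i < k \<Longrightarrow> exec Q u i = g (map u [0..<n]) ! i"
    using g unfolding realizable_def by blast
  define \<sigma> where "\<sigma> = relocate_operand Inp (length (fst P))"
  define R where "R = (fst P @ map (map_instr \<sigma>) (fst Q), snd P @ map \<sigma> (snd Q))"
  have runR: "run u (fst R) = run u (fst P) @ run u (fst Q)" for u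
    unfolding R_def \<sigma>_def using run_append_relocated[of u "fst P" Inp u "fst Q"] by simp
  show ?thesis unfolding realizable_def
  proof (intro conjI exI allI impI)
    show "length (f xs @ g xs) = m + k" if "length xs = n" for xs
      using that f g by (simp add: realizable_length)
    show "cost R \<le> a + b" using P(1) Q(1) by (simp add: R_def cost_def)
    show "length (snd R) = m + k" using P(2) Q(2) by (simp add: R_def)
    show "outputs_in_range R"
      using P(3) outputs_in_range_relocated[OF Q(3), of Inp] unfolding outputs_in_range_def
      by (fastforce simp: R_def \<sigma>_def)
  next
    fix u i assume i: "i < m + k"
    have lf: "length (f (map u [0..<n])) = m" using f by (simp add: realizable_length)
    show "exec R u i = (f (map u [0..<n]) @ g (map u [0..<n])) ! i"
    proof (cases "i < m")
      case True
      then have "exec R u i = exec P u i"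
        using eval_output_append[OF P(3)] P(2) runR unfolding exec_def R_def by (simp add: nth_append)
      then show ?thesis using P(4)[OF True] True lf by (simp add: nth_append)
    next
      case False
      then have "exec R u i = eval_operand u (run u (fst P) @ run u (fst Q)) (\<sigma> (snd Q ! (i - m)))"
        using i P(2) Q(2) runR unfolding exec_def by (simp add: R_def nth_append)
      also have "\<dots> = exec Q u (i - m)" unfolding \<sigma>_def exec_def
        by (rule eval_relocate_operand) auto
      finally show ?thesis using Q(4)[of "i - m"] False i lf by (simp add: nth_append)
    qed
  qed
qed

text \<open>Programs without instructions: each output is an input coordinate (\<open>Inl\<close>)
  or a constant (\<open>Inr\<close>).\<close>
definition select_value :: "complex list \<Rightarrow> (nat + complex) \<Rightarrow> complex" where
  "select_value xs z = (case z of Inl i \<Rightarrow> xs ! i | Inr c \<Rightarrow> c)"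

fun select_operand :: "(nat + complex) \<Rightarrow> operand" where
  "select_operand (Inl i) = Inp i" | "select_operand (Inr c) = Cst c"

lemma realizable_select:
  assumes "\<And>i. Inl i \<in> set os \<Longrightarrow> i < n" "length os = m"
  shows "realizable n m 0 (\<lambda>xs. map (select_value xs) os)"
  unfolding realizable_def
proof (intro conjI exI allI impI)
  show "cost ([], map select_operand os) \<le> 0" by (simp add: cost_def)
  have "select_operand x \<noteq> Reg r" for x r by (cases x) auto
  then show "outputs_in_range ([], map select_operand os)" unfolding outputs_in_range_def by auto
  fix u i assume i: "i < m"
  show "exec ([], map select_operand os) u i = map (select_value (map u [0..<n])) os ! i"
  proof (cases "os ! i")
    case (Inl a)
    then have "a < n" using assms i by (metis nth_mem)
    then show ?thesis using Inl i assms by (simp add: exec_def select_value_def)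
  qed (use i assms in \<open>simp add: exec_def select_value_def\<close>)
qed (use assms in auto)

lemma run_without_registers:
  assumes "\<And>ins rs. ins \<in> set is \<Longrightarrow> eval_instr u rs ins = eval_instr u [] ins"
  shows "run u is = map (eval_instr u []) is"
  using assms
proof (induction "is" rule: rev_induct)
  case (snoc x xs)
  have "eval_instr u (run u xs) x = eval_instr u [] x" by (rule snoc.prems) simp
  moreover have "run u xs = map (eval_instr u []) xs" by (rule snoc.IH) (rule snoc.prems, simp)
  ultimately show ?case by simp
qed simp

lemma realizable_pointwise:
  assumes h: "\<And>a b u rs. eval_instr u rs (opi a b) = h (eval_operand u rs a) (eval_operand u rs b)"
  shows "realizable (2 * m) m m (\<lambda>xs. map (\<lambda>i. h (xs ! i) (xs ! (i + m))) [0..<m])"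
  unfolding realizable_def
proof (intro conjI exI allI impI)
  let ?P = "(map (\<lambda>i. opi (Inp i) (Inp (i + m))) [0..<m], map Reg [0..<m])"
  show "cost ?P \<le> m" by (simp add: cost_def)
  show "outputs_in_range ?P" by (auto simp: outputs_in_range_def)
  fix u i assume i: "i < m"
  have "run u (fst ?P) = map (eval_instr u []) (fst ?P)"
    by (rule run_without_registers) (auto simp: h)
  then show "exec ?P u i = map (\<lambda>i. h (map u [0..<2 * m] ! i) (map u [0..<2 * m] ! (i + m))) [0..<m] ! i"
    using i by (simp add: exec_def h)
qed auto

lemmas realizable_add_halves = realizable_pointwise[of Add "(+)", simplified]

lemmas realizable_diff_halves = realizable_pointwise[of Sub "(-)", simplified]

lemmas realizable_mult_halves = realizable_pointwise[of Mul "(*)", simplified]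

lemma realizable_id: "realizable n n 0 (\<lambda>xs. xs)"
proof -
  have "realizable n n 0 (\<lambda>xs. map (select_value xs) (map Inl [0..<n]))" by (rule realizable_select) auto
  then show ?thesis by (rule realizable_cong) (auto simp: select_value_def intro: nth_equalityI)
qed

lemma realizable_rearrange:
  assumes "\<And>i. i < m \<Longrightarrow> (\<exists>j<n. \<forall>xs. length xs = n \<longrightarrow> g xs ! i = xs ! j) \<or> (\<exists>c. \<forall>xs. length xs = n \<longrightarrow> g xs ! i = c)"
    and "\<And>xs. length xs = n \<Longrightarrow> length (g xs) = m"
  shows "realizable n m 0 g"
proof -
  have "\<forall>i<m. \<exists>z. (\<forall>j. z = Inl j \<longrightarrow> j < n) \<and> (\<forall>xs. length xs = n \<longrightarrow> g xs ! i = select_value xs z)"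
  proof (intro allI impI)
    fix i assume "i < m"
    from assms(1)[OF this] show "\<exists>z. (\<forall>j. z = Inl j \<longrightarrow> j < n) \<and> (\<forall>xs. length xs = n \<longrightarrow> g xs ! i = select_value xs z)"
    proof
      assume "\<exists>j<n. \<forall>xs. length xs = n \<longrightarrow> g xs ! i = xs ! j"
      then obtain j where "j < n" "\<forall>xs. length xs = n \<longrightarrow> g xs ! i = xs ! j" by blast
      then show ?thesis by (intro exI[of _ "Inl j"]) (auto simp: select_value_def)
    next
      assume "\<exists>c. \<forall>xs. length xs = n \<longrightarrow> g xs ! i = c"
      then obtain c where "\<forall>xs. length xs = n \<longrightarrow> g xs ! i = c" by blast
      then show ?thesis by (intro exI[of _ "Inr c"]) (auto simp: select_value_def)
    qed
  qed
  then obtain zf where zf: "\<And>i. i < m \<Longrightarrow> (\<forall>j. zf i = Inl j \<longrightarrow> j < n) \<and> (\<forall>xs. length xs = n \<longrightarrow> g xs ! i = select_value xs (zf i))"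
    by metis
  have "realizable n m 0 (\<lambda>xs. map (select_value xs) (map zf [0..<m]))"
    by (rule realizable_select) (use zf in auto)
  then show ?thesis
    by (rule realizable_cong) (auto intro!: nth_equalityI simp: assms(2) zf)
qed

lemma realizable_rev: "realizable m m 0 rev"
  by (rule realizable_rearrange, rule disjI1, rule_tac x="m - 1 - i" in exI) (auto simp: rev_nth)

lemma realizable_take: "d \<le> m \<Longrightarrow> realizable m d 0 (take d)"
  by (rule realizable_rearrange, rule disjI1, rule_tac x="i" in exI) auto

lemma realizable_drop: "realizable (d + k) k 0 (drop d)"
  by (rule realizable_rearrange, rule disjI1, rule_tac x="d + i" in exI) auto

lemma realizable_parallel:
  assumes f: "realizable n m a f" and g: "realizable n' m' b g"
  shows "realizable (n + n') (m + m') (a + b) (\<lambda>xs. f (take n xs) @ g (drop n xs))"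
proof -
  have "realizable (n + n') (m + m') ((0 + a) + (0 + b)) (\<lambda>xs. f (take n xs) @ g (drop n xs))"
    by (rule realizable_append[OF realizable_comp[OF realizable_take f] realizable_comp[OF realizable_drop g]])
      simp
  then show ?thesis by simp
qed

lemma realizable_scale:
  assumes "length cs = m"
  shows "realizable m m m (\<lambda>xs. map (\<lambda>i. xs ! i * cs ! i) [0..<m])"
proof -
  have s: "realizable m (2 * m) 0 (\<lambda>xs. xs @ cs)"
  proof (rule realizable_rearrange)
    fix i assume "i < 2 * m"
    show "(\<exists>j<m. \<forall>xs. length xs = m \<longrightarrow> (xs @ cs) ! i = xs ! j) \<or> (\<exists>c. \<forall>xs. length xs = m \<longrightarrow> (xs @ cs) ! i = c)"
    proof (cases "i < m")
      case True then show ?thesis by (intro disjI1 exI[of _ i]) (auto simp: nth_append)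
    next
      case False then show ?thesis by (intro disjI2 exI[of _ "cs ! (i - m)"]) (auto simp: nth_append)
    qed
  qed (auto simp: assms)
  have "realizable m m (0 + m) (\<lambda>xs. map (\<lambda>i. (xs @ cs) ! i * (xs @ cs) ! (i + m)) [0..<m])"
    by (rule realizable_comp[OF s realizable_mult_halves])
  then show ?thesis by (rule realizable_cong) (auto simp: nth_append assms)
qed

lemma realizable_add:
  assumes f: "realizable n m a f" and g: "realizable n m b g"
  shows "realizable n m (a + b + m) (\<lambda>xs. map (\<lambda>i. f xs ! i + g xs ! i) [0..<m])"
proof -
  have "realizable n m (a + b + m) (\<lambda>xs. map (\<lambda>i. (f xs @ g xs) ! i + (f xs @ g xs) ! (i + m)) [0..<m])"
    using realizable_comp[OF realizable_append[OF f g] realizable_add_halves[of m, unfolded mult_2]] by (simp add: mult_2)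
  then show ?thesis by (rule realizable_cong) (auto simp: nth_append realizable_length[OF f] realizable_length[OF g])
qed

lemma realizable_diff:
  assumes f: "realizable n m a f" and g: "realizable n m b g"
  shows "realizable n m (a + b + m) (\<lambda>xs. map (\<lambda>i. f xs ! i - g xs ! i) [0..<m])"
proof -
  have "realizable n m (a + b + m) (\<lambda>xs. map (\<lambda>i. (f xs @ g xs) ! i - (f xs @ g xs) ! (i + m)) [0..<m])"
    using realizable_comp[OF realizable_append[OF f g] realizable_diff_halves[of m, unfolded mult_2]] by (simp add: mult_2)
  then show ?thesis by (rule realizable_cong) (auto simp: nth_append realizable_length[OF f] realizable_length[OF g])
qed

section \<open>The fast Fourier transform\<close>

definition dft :: "complex \<Rightarrow> complex list \<Rightarrow> complex list" where
  "dft w xs = map (\<lambda>k. \<Sum>j<length xs. xs ! j * w ^ (j * k)) [0..<length xs]"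

lemma length_dft[simp]: "length (dft w xs) = length xs" by (simp add: dft_def)

lemma nth_dft: "k < length xs \<Longrightarrow> dft w xs ! k = (\<Sum>j<length xs. xs ! j * w ^ (j * k))"
  by (simp add: dft_def)

fun fft_cost :: "nat \<Rightarrow> nat" where
  "fft_cost 0 = 0" | "fft_cost (Suc k) = 2 * fft_cost k + 3 * 2 ^ k"

lemma fft_cost_closed_form: "fft_cost K * 2 = 3 * K * 2 ^ K"
  by (induction K) (auto simp: algebra_simps)

lemma sum_even_odd:
  fixes f :: "nat \<Rightarrow> 'a::comm_monoid_add" and M :: nat
  shows "(\<Sum>j<M + M. f j) = (\<Sum>j<M. f (2 * j)) + (\<Sum>j<M. f (2 * j + 1))"
proof (induction M)
  case (Suc M)
  have "(\<Sum>j<Suc M + Suc M. f j) = (\<Sum>j<M + M. f j) + f (2 * M) + f (2 * M + 1)"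
    by (simp add: mult_2 add.assoc)
  then show ?case using Suc by (simp add: algebra_simps)
qed simp

definition even_part :: "nat \<Rightarrow> 'a list \<Rightarrow> 'a list" where
  "even_part M xs = map (\<lambda>j. xs ! (2 * j)) [0..<M]"

definition odd_part :: "nat \<Rightarrow> 'a list \<Rightarrow> 'a list" where
  "odd_part M xs = map (\<lambda>j. xs ! (2 * j + 1)) [0..<M]"

lemma dft_even_odd:
  fixes w :: complex
  assumes len: "length xs = M + M" and k: "k < M + M"
  shows "dft w xs ! k = (\<Sum>j<M. even_part M xs ! j * (w^2) ^ (j * k))
    + w ^ k * (\<Sum>j<M. odd_part M xs ! j * (w^2) ^ (j * k))"
proof -
  have even: "w ^ (2 * j * k) = (w^2) ^ (j * k)" for j by (simp add: power_mult mult.assoc)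
  have odd: "w ^ ((2 * j + 1) * k) = w ^ k * (w^2) ^ (j * k)" for j
  proof -
    have "(2 * j + 1) * k = k + 2 * (j * k)" by simp
    then show ?thesis by (simp only: power_add power_mult)
  qed
  have "dft w xs ! k = (\<Sum>j<M + M. xs ! j * w ^ (j * k))" using k len by (simp add: nth_dft)
  also have "\<dots> = (\<Sum>j<M. xs ! (2 * j) * w ^ (2 * j * k)) + (\<Sum>j<M. xs ! (2 * j + 1) * w ^ ((2 * j + 1) * k))"
    by (rule sum_even_odd)
  also have "\<dots> = (\<Sum>j<M. even_part M xs ! j * (w^2) ^ (j * k))
      + w ^ k * (\<Sum>j<M. odd_part M xs ! j * (w^2) ^ (j * k))"
    unfolding even odd sum_distrib_left by (simp add: even_part_def odd_part_def mult_ac)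
  finally show ?thesis .
qed

lemma dft_split:
  fixes w :: complex
  assumes len: "length xs = M + M" and wM: "w ^ M = -1" and i: "i < M"
  defines "ev \<equiv> even_part M xs" and "od \<equiv> odd_part M xs"
  shows "dft w xs ! i = dft (w^2) ev ! i + w ^ i * dft (w^2) od ! i"
    and "dft w xs ! (i + M) = dft (w^2) ev ! i - w ^ i * dft (w^2) od ! i"
proof -
  have lens: "length ev = M" "length od = M" by (simp_all add: ev_def od_def even_part_def odd_part_def)
  have "(w^2) ^ (j * M) = 1" for j
    by (metis mult.commute power_minus1_even power_mult wM)
  then have shift: "(w^2) ^ (j * (i + M)) = (w^2) ^ (j * i)" for j
    by (simp add: add_mult_distrib2 power_add)
  show "dft w xs ! i = dft (w^2) ev ! i + w ^ i * dft (w^2) od ! i"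
    using dft_even_odd[OF len, of i w] i lens by (simp add: nth_dft ev_def od_def)
  show "dft w xs ! (i + M) = dft (w^2) ev ! i - w ^ i * dft (w^2) od ! i"
    using dft_even_odd[OF len, of "i + M" w] i lens wM
    by (simp add: nth_dft ev_def od_def shift power_add)
qed

lemma dft_butterfly:
  fixes w :: complex
  assumes len: "length xs = M + M" and wM: "w ^ M = -1"
  defines "Ev \<equiv> dft (w^2) (even_part M xs)" and "Od \<equiv> dft (w^2) (odd_part M xs)"
  shows "dft w xs = map (\<lambda>i. Ev ! i + w ^ i * Od ! i) [0..<M] @ map (\<lambda>i. Ev ! i - w ^ i * Od ! i) [0..<M]"
proof (rule nth_equalityI)
  fix i assume i: "i < length (dft w xs)"
  show "dft w xs ! i = (map (\<lambda>i. Ev ! i + w ^ i * Od ! i) [0..<M] @ map (\<lambda>i. Ev ! i - w ^ i * Od ! i) [0..<M]) ! i"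
  proof (cases "i < M")
    case True
    then show ?thesis using dft_split(1)[OF len wM True] by (simp add: nth_append Ev_def Od_def)
  next
    case False
    define j where "j = i - M"
    have j: "j < M" "i = j + M" using False i len by (auto simp: j_def)
    show ?thesis using dft_split(2)[OF len wM j(1)] j by (simp add: nth_append Ev_def Od_def)
  qed
qed (use len in simp)

lemma realizable_fft:
  "(k > 0 \<longrightarrow> w ^ (2 ^ (k - 1)) = -1) \<Longrightarrow> realizable (2 ^ k) (2 ^ k) (fft_cost k) (dft w)"
proof (induction k arbitrary: w)
  case 0
  have "realizable 1 1 0 (dft w)" using realizable_id[of 1]
    by (rule realizable_cong) (auto simp: dft_def intro!: nth_equalityI)
  then show ?case by simp
next
  case (Suc k)
  define M where "M = (2::nat) ^ k"
  have wM: "w ^ M = -1" using Suc.prems by (simp add: M_def)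
  have "(w^2) ^ (2 ^ (k - 1)) = -1" if "k > 0"
  proof -
    have "(w^2) ^ (2 ^ (k - 1)) = w ^ (2 * 2 ^ (k - 1))" by (simp add: power_mult)
    also have "2 * 2 ^ (k - 1) = M" using that by (simp add: M_def power_Suc[symmetric])
    finally show ?thesis using wM by simp
  qed
  then have IH: "realizable M M (fft_cost k) (dft (w^2))" using Suc.IH unfolding M_def by blast
  define tw where "tw = map (\<lambda>i. w ^ i) [0..<M]"
  define F2 where "F2 ys = dft (w^2) (take M ys) @ dft (w^2) (drop M ys)" for ys :: "complex list"
  define F3 where "F3 ys = take M ys @ map (\<lambda>i. drop M ys ! i * tw ! i) [0..<M]" for ys :: "complex list"
  define F4 where "F4 ys = map (\<lambda>i. ys ! i + ys ! (i + M)) [0..<M] @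
                                             map (\<lambda>i. ys ! i - ys ! (i + M)) [0..<M]" for ys :: "complex list"
  have s1: "realizable (M + M) (M + M) 0 (\<lambda>xs. even_part M xs @ odd_part M xs)"
  proof (rule realizable_rearrange)
    fix i assume i: "i < M + M"
    show "(\<exists>j<M + M. \<forall>xs. length xs = M + M \<longrightarrow> (even_part M xs @ odd_part M xs) ! i = xs ! j) \<or>
          (\<exists>c. \<forall>xs. length xs = M + M \<longrightarrow> (even_part M xs @ odd_part M xs) ! i = c)"
    proof (cases "i < M")
      case True then show ?thesis
        by (intro disjI1 exI[of _ "2 * i"]) (auto simp: nth_append even_part_def)
    next
      case False then show ?thesis using i
        by (intro disjI1 exI[of _ "2 * (i - M) + 1"]) (auto simp: nth_append even_part_def odd_part_def)
    qed
  qed (auto simp: even_part_def odd_part_def)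
  have s2: "realizable (M + M) (M + M) (fft_cost k + fft_cost k) F2"
    unfolding F2_def by (rule realizable_parallel[OF IH IH])
  have s3: "realizable (M + M) (M + M) (0 + M) F3"
    unfolding F3_def by (rule realizable_parallel[OF realizable_id realizable_scale]) (simp add: tw_def)
  have s4: "realizable (M + M) (M + M) (M + M) F4"
    unfolding F4_def
    by (rule realizable_append[OF realizable_add_halves[of M, unfolded mult_2]
          realizable_diff_halves[of M, unfolded mult_2]])
  have "realizable (M + M) (M + M) (fft_cost (Suc k)) (dft w)"
  proof (rule realizable_cong[OF realizable_comp[OF realizable_comp[OF realizable_comp[OF s1 s2] s3] s4]])
    fix xs :: "complex list" assume len: "length xs = M + M"
    have "length (even_part M xs) = M" "length (odd_part M xs) = M"
      by (simp_all add: even_part_def odd_part_def)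
    then show "dft w xs = F4 (F3 (F2 (even_part M xs @ odd_part M xs)))"
      unfolding dft_butterfly[OF len wM]
      by (auto simp: F4_def F3_def F2_def tw_def nth_append mult.commute intro!: nth_equalityI)
  qed (simp add: M_def)
  moreover have "(2::nat) ^ Suc k = M + M" by (simp add: M_def)
  ultimately show ?case by (simp only:)
qed

definition unit_root :: "nat \<Rightarrow> complex" where "unit_root N = cis (2 * pi / real N)"

lemma unit_root_power: "unit_root N ^ p = cis (real p * (2 * pi / real N))"
  by (simp add: unit_root_def DeMoivre)

lemma unit_root_power_order: "N > 0 \<Longrightarrow> unit_root N ^ N = 1"
  by (simp add: unit_root_power)

lemma unit_root_nonzero[simp]: "unit_root N \<noteq> 0"
  by (simp add: unit_root_def)

lemma unit_root_power_neq_1: assumes "0 < d" "d < N" shows "unit_root N ^ d \<noteq> 1"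
proof
  assume "unit_root N ^ d = 1"
  then obtain n :: int where n: "real d * (2 * pi / real N) = of_int n * (2 * pi)"
    by (auto simp: unit_root_power cis_eq_1_iff)
  have "(real d / real N) * (2 * pi) = real d * (2 * pi / real N)" by simp
  with n have "(real d / real N) * (2 * pi) = of_int n * (2 * pi)" by simp
  then have "real d / real N = of_int n" using pi_gt_zero by (simp only: mult_right_cancel)
  moreover have "0 < real d / real N" "real d / real N < 1" using assms by auto
  ultimately have "0 < n" "n < 1" by simp_all
  then show False by simp
qed

lemma unit_root_power_inj: assumes "p < N" "q < N" "unit_root N ^ p = unit_root N ^ q" shows "p = q"
proof (rule ccontr)
  assume ne: "p \<noteq> q"
  have aux: "a = b" if "a < N" "b < N" "a < b" "unit_root N ^ a = unit_root N ^ b" for a b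
  proof -
    have "unit_root N ^ b = unit_root N ^ a * unit_root N ^ (b - a)" using that by (metis le_add_diff_inverse less_imp_le power_add)
    then have "unit_root N ^ (b - a) = 1" using that(4) by simp
    moreover have "0 < b - a" "b - a < N" using that by auto
    ultimately show ?thesis using unit_root_power_neq_1[of "b - a" N] by blast
  qed
  show False using ne aux[of p q] aux[of q p] assms by (cases "p < q") auto
qed

lemma unit_root_power_half: assumes "N = 2 ^ Suc k" shows "unit_root N ^ (2 ^ k) = -1"
  using assms by (simp add: unit_root_power)

lemma inverse_unit_root_power_half: assumes "N = 2 ^ Suc k" shows "(inverse (unit_root N)) ^ (2 ^ k) = -1"
  using unit_root_power_half[OF assms] by (metis power_inverse inverse_minus_eq inverse_1)

lemma unit_root_orthogonality:
  assumes N: "N > 0" and p: "p < N" and j: "j < N"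
  shows "(\<Sum>k<N. unit_root N ^ (p * k) * inverse (unit_root N) ^ (j * k)) = (if p = j then of_nat N else 0)"
proof -
  define z where "z = unit_root N ^ p * inverse (unit_root N) ^ j"
  have zk: "unit_root N ^ (p * k) * inverse (unit_root N) ^ (j * k) = z ^ k" for k
    by (simp add: z_def power_mult power_mult_distrib)
  show ?thesis
  proof (cases "p = j")
    case True
    then have "z = 1" by (simp add: z_def power_inverse)
    have "(\<Sum>k<N. unit_root N ^ (p * k) * inverse (unit_root N) ^ (j * k)) = (\<Sum>k<N. z ^ k)" by (simp only: zk)
    then show ?thesis using True \<open>z = 1\<close> by simp
  next
    case False
    have z1: "z \<noteq> 1"
    proof
      assume "z = 1"
      then have "unit_root N ^ p = unit_root N ^ j" by (simp add: z_def power_inverse field_simps)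
      then show False using unit_root_power_inj[OF p j] False by simp
    qed
    have "z ^ N = (unit_root N ^ N) ^ p * inverse (unit_root N ^ N) ^ j"
      by (simp add: z_def power_mult_distrib power_inverse flip: power_mult) (simp add: mult.commute)
    then have zN: "z ^ N = 1" using unit_root_power_order[OF N] by simp
    have "(\<Sum>k<N. z ^ k) = 0" using geometric_sum[OF z1, of N] zN by simp
    moreover have "(\<Sum>k<N. unit_root N ^ (p * k) * inverse (unit_root N) ^ (j * k)) = (\<Sum>k<N. z ^ k)" by (simp only: zk)
    ultimately show ?thesis using False by simp
  qed
qed

lemma sum_convolution_delta:
  fixes x y :: "nat \<Rightarrow> 'a::comm_semiring_1"
  assumes j: "j < N"
  shows "(\<Sum>i<N. \<Sum>l<N. x i * y l * (if i + l = j then 1 else 0)) = (\<Sum>i\<le>j. x i * y (j - i))"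
proof -
  have "(\<Sum>i<N. \<Sum>l<N. x i * y l * (if i + l = j then 1 else 0)) = (\<Sum>i<N. if i \<le> j then x i * y (j - i) else 0)"
  proof (intro sum.cong refl)
    fix i assume "i \<in> {..<N}"
    show "(\<Sum>l<N. x i * y l * (if i + l = j then 1 else 0)) = (if i \<le> j then x i * y (j - i) else 0)"
    proof (cases "i \<le> j")
      case True
      have "(\<Sum>l<N. x i * y l * (if i + l = j then 1 else 0)) = (\<Sum>l<N. if l = j - i then x i * y l else 0)"
        by (intro sum.cong refl) (use True in auto)
      also have "\<dots> = x i * y (j - i)" using j True by (simp add: sum.delta)
      finally show ?thesis using True by simp
    qed auto
  qed
  also have "\<dots> = (\<Sum>i\<le>j. x i * y (j - i))"
  proof -
    have "{i\<in>{..<N}. i \<le> j} = {..j}" using j by auto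
    then show ?thesis by (simp add: sum.inter_filter[symmetric])
  qed
  finally show ?thesis .
qed

lemma inverse_dft_of_product:
  fixes x y :: "nat \<Rightarrow> complex"
  assumes N: "N > 0" and x0: "\<And>i. i \<ge> la \<Longrightarrow> x i = 0" and y0: "\<And>l. l \<ge> lb \<Longrightarrow> y l = 0"
    and lab: "la + lb \<le> N + 1" and j: "j < N"
  shows "(\<Sum>k<N. (\<Sum>i<N. x i * unit_root N ^ (i * k)) * (\<Sum>l<N. y l * unit_root N ^ (l * k)) / of_nat N
             * inverse (unit_root N) ^ (j * k)) = (\<Sum>i\<le>j. x i * y (j - i))"
proof -
  let ?w = "unit_root N" and ?v = "inverse (unit_root N)"
  have trm: "x i * y l * (\<Sum>k<N. ?w ^ ((i + l) * k) * ?v ^ (j * k)) = x i * y l * (if i + l = j then of_nat N else 0)"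
    if "i < N" "l < N" for i l
  proof (cases "x i * y l = 0")
    case False
    then have "i < la" "l < lb" using x0 y0 by (auto simp: not_less[symmetric])
    then have "i + l < N" using lab by linarith
    then show ?thesis using unit_root_orthogonality[OF N _ j] by simp
  qed simp
  have "(\<Sum>k<N. (\<Sum>i<N. x i * ?w ^ (i * k)) * (\<Sum>l<N. y l * ?w ^ (l * k)) / of_nat N * ?v ^ (j * k))
      = (\<Sum>k<N. \<Sum>i<N. \<Sum>l<N. x i * y l * (?w ^ ((i + l) * k) * ?v ^ (j * k)) / of_nat N)"
  proof (intro sum.cong refl)
    fix k
    show "(\<Sum>i<N. x i * ?w ^ (i * k)) * (\<Sum>l<N. y l * ?w ^ (l * k)) / of_nat N * ?v ^ (j * k) =
          (\<Sum>i<N. \<Sum>l<N. x i * y l * (?w ^ ((i + l) * k) * ?v ^ (j * k)) / of_nat N)"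
    proof -
      have g: "(\<Sum>i\<in>A. f i) * (\<Sum>l\<in>B. g l) * c = (\<Sum>i\<in>A. \<Sum>l\<in>B. f i * g l * c)"
        for A B and f g :: "nat \<Rightarrow> complex" and c
        by (simp add: sum_distrib_left sum_distrib_right mult.assoc) (rule sum.swap)
      have "(\<Sum>i<N. x i * ?w ^ (i * k)) * (\<Sum>l<N. y l * ?w ^ (l * k)) / of_nat N * ?v ^ (j * k)
          = (\<Sum>i<N. x i * ?w ^ (i * k)) * (\<Sum>l<N. y l * ?w ^ (l * k)) * (?v ^ (j * k) / of_nat N)"
        by simp
      also have "\<dots> = (\<Sum>i<N. \<Sum>l<N. (x i * ?w ^ (i * k)) * (y l * ?w ^ (l * k)) * (?v ^ (j * k) / of_nat N))"
        by (rule g)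
      also have "\<dots> = (\<Sum>i<N. \<Sum>l<N. x i * y l * (?w ^ ((i + l) * k) * ?v ^ (j * k)) / of_nat N)"
        by (intro sum.cong refl) (simp add: add_mult_distrib power_add)
      finally show ?thesis .
    qed
  qed
  also have "\<dots> = (\<Sum>i<N. \<Sum>k<N. \<Sum>l<N. x i * y l * (?w ^ ((i + l) * k) * ?v ^ (j * k)) / of_nat N)"
    by (rule sum.swap)
  also have "\<dots> = (\<Sum>i<N. \<Sum>l<N. \<Sum>k<N. x i * y l * (?w ^ ((i + l) * k) * ?v ^ (j * k)) / of_nat N)"
    by (rule sum.cong[OF refl], rule sum.swap)
  also have "\<dots> = (\<Sum>i<N. \<Sum>l<N. x i * y l * (\<Sum>k<N. ?w ^ ((i + l) * k) * ?v ^ (j * k)) / of_nat N)"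
    by (rule sum.cong[OF refl], rule sum.cong[OF refl]) (simp only: sum_distrib_left sum_divide_distrib)
  also have "\<dots> = (\<Sum>i<N. \<Sum>l<N. x i * y l * (if i + l = j then 1 else 0))"
    by (intro sum.cong refl) (use N in \<open>simp add: trm\<close>)
  also have "\<dots> = (\<Sum>i\<le>j. x i * y (j - i))" by (rule sum_convolution_delta[OF j])
  finally show ?thesis .
qed

section \<open>Polynomial multiplication\<close>

definition coeffs_upto :: "nat \<Rightarrow> complex poly \<Rightarrow> complex list" where
  "coeffs_upto L p = map (coeff p) [0..<L]"

lemma length_coeffs_upto[simp]: "length (coeffs_upto L p) = L" by (simp add: coeffs_upto_def)

lemma nth_coeffs_upto[simp]: "i < L \<Longrightarrow> coeffs_upto L p ! i = coeff p i" by (simp add: coeffs_upto_def)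

lemma Poly_coeffs_upto: "degree p < L \<Longrightarrow> Poly (coeffs_upto L p) = p"
  by (rule poly_eqI) (auto simp: coeffs_upto_def nth_default_def coeff_eq_0)

lemma coeffs_upto_Poly: "length a = L \<Longrightarrow> coeffs_upto L (Poly a) = a"
  by (auto simp: coeffs_upto_def nth_default_def intro!: nth_equalityI)

lemma coeff_mult_eq_inverse_dft:
  fixes a :: "complex list" and q :: "complex poly"
  assumes N0: "N > 0" and la: "length a = la" and dq: "degree q < lb" and lab: "la + lb \<le> N + 1"
    and j: "j < N"
  defines "w \<equiv> unit_root N"
  shows "coeff (Poly a * q) j = dft (inverse w)
    (map (\<lambda>k. dft w (a @ replicate (N - la) 0) ! k * (dft w (map (coeff q) [0..<N]) ! k / of_nat N)) [0..<N]) ! j"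
proof -
  define x where "x i = nth_default 0 a i" for i
  have laN: "la \<le> N" using lab dq by linarith
  have A: "dft w (a @ replicate (N - la) 0) ! k = (\<Sum>i<N. x i * w ^ (i * k))" if "k < N" for k
  proof -
    have "(a @ replicate (N - la) 0) ! i = x i" if "i < N" for i
      using that la by (auto simp: nth_append x_def nth_default_def)
    then show ?thesis using that la laN by (simp add: nth_dft)
  qed
  have B: "dft w (map (coeff q) [0..<N]) ! k = (\<Sum>l<N. coeff q l * w ^ (l * k))" if "k < N" for k
    using that by (simp add: nth_dft)
  have "coeff (Poly a * q) j = (\<Sum>i\<le>j. x i * coeff q (j - i))" by (simp add: coeff_mult x_def)
  also have "\<dots> = (\<Sum>k<N. (\<Sum>i<N. x i * w ^ (i * k)) * (\<Sum>l<N. coeff q l * w ^ (l * k)) / of_nat N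
             * inverse w ^ (j * k))"
    unfolding w_def
  proof (rule inverse_dft_of_product[OF N0 _ _ lab j, symmetric])
    show "x i = 0" if "la \<le> i" for i using that la by (simp add: x_def nth_default_def)
    show "coeff q l = 0" if "lb \<le> l" for l using that dq by (simp add: coeff_eq_0)
  qed
  also have "\<dots> = dft (inverse w)
    (map (\<lambda>k. dft w (a @ replicate (N - la) 0) ! k * (dft w (map (coeff q) [0..<N]) ! k / of_nat N)) [0..<N]) ! j"
    using j by (simp add: nth_dft A B mult.commute)
  finally show ?thesis .
qed

lemma realizable_zero_pad: "la \<le> N \<Longrightarrow> realizable la N 0 (\<lambda>a. a @ replicate (N - la) 0)"
proof (rule realizable_rearrange)
  fix i assume "la \<le> N" "i < N"
  then show "(\<exists>j<la. \<forall>xs. length xs = la \<longrightarrow> (xs @ replicate (N - la) 0) ! i = xs ! j) \<or>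
      (\<exists>c. \<forall>xs. length xs = la \<longrightarrow> (xs @ replicate (N - la) 0) ! i = c)"
    by (cases "i < la") (auto simp: nth_append)
qed simp

lemma realizable_poly_mult_fft:
  assumes NK: "N = 2 ^ Suc K" and dq: "degree q < lb" and lab: "la + lb \<le> N + 1" and L: "L \<le> N"
  shows "realizable la L (2 * fft_cost (Suc K) + N) (\<lambda>a. coeffs_upto L (Poly a * q))"
proof -
  let ?w = "unit_root N"
  have N0: "N > 0" using NK by simp
  have laN: "la \<le> N" using lab dq by linarith
  define cs where "cs = map (\<lambda>k. dft ?w (map (coeff q) [0..<N]) ! k / of_nat N) [0..<N]"
  have fft: "realizable N N (fft_cost (Suc K)) (dft ?w)"
    unfolding NK by (rule realizable_fft) (simp add: unit_root_power_half NK)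
  have inverse_fft: "realizable N N (fft_cost (Suc K)) (dft (inverse ?w))"
    unfolding NK by (rule realizable_fft) (simp add: inverse_unit_root_power_half NK)
  have scale: "realizable N N N (\<lambda>ys. map (\<lambda>i. ys ! i * cs ! i) [0..<N])"
    by (rule realizable_scale) (simp add: cs_def)
  have all: "realizable la L (0 + fft_cost (Suc K) + N + fft_cost (Suc K) + 0)
      (\<lambda>a. take L (dft (inverse ?w) (map (\<lambda>i. dft ?w (a @ replicate (N - la) 0) ! i * cs ! i) [0..<N])))"
    by (rule realizable_comp[OF realizable_comp[OF realizable_comp[OF
          realizable_comp[OF realizable_zero_pad[OF laN] fft] scale] inverse_fft] realizable_take[OF L]])
  show ?thesis
  proof (rule realizable_cong[OF all])
    fix a :: "complex list" assume la: "length a = la"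
    show "coeffs_upto L (Poly a * q) =
        take L (dft (inverse ?w) (map (\<lambda>i. dft ?w (a @ replicate (N - la) 0) ! i * cs ! i) [0..<N]))"
    proof -
      have cs_eq: "map (\<lambda>i. dft ?w (a @ replicate (N - la) 0) ! i * cs ! i) [0..<N] =
          map (\<lambda>k. dft ?w (a @ replicate (N - la) 0) ! k * (dft ?w (map (coeff q) [0..<N]) ! k / of_nat N)) [0..<N]"
        by (auto simp: cs_def)
      show ?thesis unfolding cs_eq using L coeff_mult_eq_inverse_dft[OF N0 la dq lab]
        by (auto intro!: nth_equalityI)
    qed
  qed simp
qed

function ceil_log2 :: "nat \<Rightarrow> nat" where
  "ceil_log2 x = (if x \<le> 1 then 0 else Suc (ceil_log2 ((x + 1) div 2)))"
  by auto
termination by (relation "measure id") auto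
declare ceil_log2.simps[simp del]

lemma le_power_ceil_log2: "x \<le> 2 ^ ceil_log2 x"
proof (induction x rule: ceil_log2.induct)
  case (1 x)
  show ?case
  proof (cases "x \<le> 1")
    case True then show ?thesis by (simp add: ceil_log2.simps)
  next
    case False
    then have "(x + 1) div 2 \<le> 2 ^ ceil_log2 ((x + 1) div 2)" using 1 by simp
    then show ?thesis using False by (subst ceil_log2.simps) simp
  qed
qed

lemma power_pred_ceil_log2_less: "0 < ceil_log2 x \<Longrightarrow> 2 ^ (ceil_log2 x - 1) < x"
proof (induction x rule: ceil_log2.induct)
  case (1 x)
  show ?case
  proof (cases "x \<le> 1")
    case True then show ?thesis using 1 by (simp add: ceil_log2.simps)
  next
    case False
    define y where "y = (x + 1) div 2"
    have cx: "ceil_log2 x = Suc (ceil_log2 y)" using False by (subst ceil_log2.simps) (simp add: y_def)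
    show ?thesis
    proof (cases "ceil_log2 y = 0")
      case True then show ?thesis using cx False by simp
    next
      case False2: False
      then have "2 ^ (ceil_log2 y - 1) < y" using 1 \<open>\<not> x \<le> 1\<close> by (simp add: y_def)
      then have "2 * 2 ^ (ceil_log2 y - 1) \<le> 2 * (y - 1)" by simp
      moreover have "2 * 2 ^ (ceil_log2 y - 1) = (2::nat) ^ ceil_log2 y" using False2
        by (cases "ceil_log2 y") auto
      moreover have "2 * (y - 1) < x" using False by (simp add: y_def)
      ultimately show ?thesis using cx by simp
    qed
  qed
qed

lemma power_ceil_log2_less: "1 \<le> x \<Longrightarrow> 2 ^ ceil_log2 x < 2 * x"
proof (cases "ceil_log2 x = 0")
  case False
  then have "2 ^ (ceil_log2 x - 1) < x" by (intro power_pred_ceil_log2_less) simp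
  moreover have "(2::nat) ^ ceil_log2 x = 2 * 2 ^ (ceil_log2 x - 1)" using False
    by (cases "ceil_log2 x") auto
  ultimately show ?thesis by simp
qed simp

lemma ceil_log2_least: "x \<le> 2 ^ k \<Longrightarrow> ceil_log2 x \<le> k"
proof (rule ccontr)
  assume a: "x \<le> 2 ^ k" "\<not> ceil_log2 x \<le> k"
  then have "(2::nat) ^ k \<le> 2 ^ (ceil_log2 x - 1)" by (intro power_increasing) auto
  moreover have "2 ^ (ceil_log2 x - 1) < x" using a by (intro power_pred_ceil_log2_less) simp
  ultimately show False using a(1) by linarith
qed

lemma ceil_log2_mono: "x \<le> y \<Longrightarrow> ceil_log2 x \<le> ceil_log2 y"
  using ceil_log2_least[of x "ceil_log2 y"] le_power_ceil_log2[of y] by simp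

lemma ceil_log2_half: "2 \<le> m \<Longrightarrow> ceil_log2 m = Suc (ceil_log2 ((m + 1) div 2))"
  by (subst ceil_log2.simps) simp

definition poly_mult_cost :: "nat \<Rightarrow> nat" where
  "poly_mult_cost x = 2 * fft_cost (Suc (ceil_log2 x)) + 2 ^ Suc (ceil_log2 x)"

lemma realizable_poly_mult:
  assumes "degree q < lb" "la + lb \<le> x + 1" "L \<le> x"
  shows "realizable la L (poly_mult_cost x) (\<lambda>a. coeffs_upto L (Poly a * q))"
  unfolding poly_mult_cost_def
proof (rule realizable_poly_mult_fft[OF refl assms(1)])
  have "x \<le> 2 ^ ceil_log2 x" by (rule le_power_ceil_log2)
  then show "la + lb \<le> 2 ^ Suc (ceil_log2 x) + 1" "L \<le> 2 ^ Suc (ceil_log2 x)" using assms by simp_all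
qed

lemma poly_mult_cost_bound: "1 \<le> x \<Longrightarrow> poly_mult_cost x \<le> 16 * x * (ceil_log2 x + 1)"
proof -
  assume x: "1 \<le> x"
  let ?c = "ceil_log2 x"
  have "poly_mult_cost x = (3 * Suc ?c + 1) * 2 ^ Suc ?c" unfolding poly_mult_cost_def
    using fft_cost_closed_form[of "Suc ?c"] by (simp add: algebra_simps)
  also have "\<dots> = (3 * ?c + 4) * (2 * 2 ^ ?c)" by simp
  also have "\<dots> \<le> (3 * ?c + 4) * (4 * x)" using power_ceil_log2_less[OF x] by (intro mult_le_mono2) simp
  also have "\<dots> \<le> 16 * x * (?c + 1)" by (simp add: algebra_simps)
  finally show ?thesis .
qed

lemma poly_mult_cost_mono: "x \<le> y \<Longrightarrow> poly_mult_cost x \<le> poly_mult_cost y"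
proof -
  assume "x \<le> y"
  then have c: "ceil_log2 x \<le> ceil_log2 y" by (rule ceil_log2_mono)
  have fm: "fft_cost a \<le> fft_cost b" if "a \<le> b" for a b
  proof -
    have "(2::nat) ^ a \<le> 2 ^ b" using that by (rule power_increasing) simp
    then have "3 * a * 2 ^ a \<le> 3 * b * (2::nat) ^ b" using that by (simp add: mult_le_mono)
    then have "fft_cost a * 2 \<le> fft_cost b * 2" unfolding fft_cost_closed_form .
    then show ?thesis by simp
  qed
  have a: "(2::nat) ^ (ceil_log2 x) \<le> 2 ^ (ceil_log2 y)" using c by (intro power_increasing) auto
  have b: "fft_cost (ceil_log2 x) \<le> fft_cost (ceil_log2 y)" using fm c by simp
  have e: "poly_mult_cost z = 8 * 2 ^ ceil_log2 z + 4 * fft_cost (ceil_log2 z)" for z by (simp add: poly_mult_cost_def)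
  show ?thesis unfolding e using a b by linarith
qed

lemma poly_mult_cost_double: "1 \<le> m \<Longrightarrow> poly_mult_cost (2 * m) \<le> 64 * m * (ceil_log2 m + 1)"
proof -
  assume m: "1 \<le> m"
  have "2 * m \<le> 2 ^ (ceil_log2 m + 1)" using le_power_ceil_log2[of m] by simp
  then have c2: "ceil_log2 (2 * m) \<le> ceil_log2 m + 1" by (rule ceil_log2_least)
  have "poly_mult_cost (2 * m) \<le> 16 * (2 * m) * (ceil_log2 (2 * m) + 1)" using poly_mult_cost_bound[of "2 * m"] m by simp
  also have "\<dots> \<le> 16 * (2 * m) * (ceil_log2 m + 2)" using c2 by (intro mult_le_mono2) simp
  also have "\<dots> \<le> 64 * m * (ceil_log2 m + 1)" by (simp add: algebra_simps)
  finally show ?thesis .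
qed

section \<open>Subproduct trees\<close>

definition prod_polys :: "complex poly list \<Rightarrow> complex poly" where
  "prod_polys fs = (\<Prod>k<length fs. fs ! k)"

definition cofactor_sum :: "complex poly list \<Rightarrow> complex list \<Rightarrow> complex poly" where
  "cofactor_sum fs us = (\<Sum>i<length fs. smult (us ! i) (\<Prod>k\<in>{..<length fs} - {i}. fs ! k))"

lemma prod_shift_interval:
  fixes g :: "nat \<Rightarrow> 'a::comm_monoid_mult"
  shows "(\<Prod>k\<in>{l..<l+r}. g k) = (\<Prod>k<r. g (k + l))"
  by (rule prod.reindex_bij_witness[where i="\<lambda>k. k + l" and j="\<lambda>k. k - l"]) auto

lemma prod_shift_interval_remove:
  fixes g :: "nat \<Rightarrow> 'a::comm_monoid_mult"
  shows "(\<Prod>k\<in>{l..<l+r} - {l + j}. g k) = (\<Prod>k\<in>{..<r} - {j}. g (k + l))"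
  by (rule prod.reindex_bij_witness[where i="\<lambda>k. k + l" and j="\<lambda>k. k - l"]) auto

lemma sum_shift_interval:
  fixes g :: "nat \<Rightarrow> 'a::comm_monoid_add"
  shows "(\<Sum>k\<in>{l..<l+r}. g k) = (\<Sum>k<r. g (k + l))"
  by (rule sum.reindex_bij_witness[where i="\<lambda>k. k + l" and j="\<lambda>k. k - l"]) auto

lemma prod_polys_append: "prod_polys (L @ R) = prod_polys L * prod_polys R"
proof -
  have "prod_polys (L @ R) = (\<Prod>k\<in>{..<length L} \<union> {length L..<length L + length R}. (L @ R) ! k)"
    unfolding prod_polys_def by (intro prod.cong) auto
  also have "\<dots> = (\<Prod>k<length L. (L @ R) ! k) * (\<Prod>k\<in>{length L..<length L + length R}. (L @ R) ! k)"
    by (rule prod.union_disjoint) auto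
  also have "\<dots> = prod_polys L * prod_polys R" unfolding prod_polys_def prod_shift_interval by (simp add: nth_append)
  finally show ?thesis .
qed

lemma cofactor_sum_append:
  assumes "length uL = length L" "length uR = length R"
  shows "cofactor_sum (L @ R) (uL @ uR) = cofactor_sum L uL * prod_polys R + cofactor_sum R uR * prod_polys L"
proof -
  let ?l = "length L" and ?r = "length R"
  let ?fs = "L @ R" and ?us = "uL @ uR"
  define T where "T i = smult (?us ! i) (\<Prod>k\<in>{..<?l + ?r} - {i}. ?fs ! k)" for i
  have "cofactor_sum ?fs ?us = (\<Sum>i\<in>{..<?l} \<union> {?l..<?l + ?r}. T i)"
    unfolding cofactor_sum_def T_def by (intro sum.cong) auto
  also have "\<dots> = (\<Sum>i<?l. T i) + (\<Sum>i\<in>{?l..<?l + ?r}. T i)"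
    by (rule sum.union_disjoint) auto
  also have "(\<Sum>i<?l. T i) = cofactor_sum L uL * prod_polys R"
  proof -
    have "T i = smult (uL ! i) (\<Prod>k\<in>{..<?l} - {i}. L ! k) * prod_polys R" if i: "i < ?l" for i
    proof -
      have se: "{..<?l + ?r} - {i} = ({..<?l} - {i}) \<union> {?l..<?l + ?r}" using i by auto
      have "(\<Prod>k\<in>{..<?l + ?r} - {i}. ?fs ! k) =
          (\<Prod>k\<in>{..<?l} - {i}. ?fs ! k) * (\<Prod>k\<in>{?l..<?l + ?r}. ?fs ! k)"
        unfolding se by (rule prod.union_disjoint) auto
      also have "\<dots> = (\<Prod>k\<in>{..<?l} - {i}. L ! k) * prod_polys R"
        unfolding prod_shift_interval prod_polys_def by (simp add: nth_append)
      finally show ?thesis using i assms by (simp add: T_def nth_append mult_smult_left)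
    qed
    then show ?thesis unfolding cofactor_sum_def sum_distrib_right by simp
  qed
  also have "(\<Sum>i\<in>{?l..<?l + ?r}. T i) = cofactor_sum R uR * prod_polys L"
  proof -
    have "T (j + ?l) = smult (uR ! j) (\<Prod>k\<in>{..<?r} - {j}. R ! k) * prod_polys L" if j: "j < ?r" for j
    proof -
      have se: "{..<?l + ?r} - {?l + j} = {..<?l} \<union> ({?l..<?l + ?r} - {?l + j})" using j by auto
      have "(\<Prod>k\<in>{..<?l + ?r} - {?l + j}. ?fs ! k) =
          (\<Prod>k<?l. ?fs ! k) * (\<Prod>k\<in>{?l..<?l + ?r} - {?l + j}. ?fs ! k)"
        unfolding se by (rule prod.union_disjoint) auto
      also have "\<dots> = prod_polys L * (\<Prod>k\<in>{..<?r} - {j}. R ! k)"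
        unfolding prod_shift_interval_remove prod_polys_def by (simp add: nth_append)
      finally show ?thesis using j assms by (simp add: T_def nth_append mult_smult_left add.commute mult.commute)
    qed
    then show ?thesis unfolding sum_shift_interval cofactor_sum_def sum_distrib_right by simp
  qed
  finally show ?thesis .
qed

lemma degree_prod_polys: "(\<And>f. f \<in> set fs \<Longrightarrow> degree f \<le> 1) \<Longrightarrow> degree (prod_polys fs) \<le> length fs"
proof -
  assume d: "\<And>f. f \<in> set fs \<Longrightarrow> degree f \<le> 1"
  have "degree (prod_polys fs) \<le> (\<Sum>k<length fs. degree (fs ! k))"
    unfolding prod_polys_def using degree_prod_sum_le[of "{..<length fs}" "\<lambda>k. fs ! k"] by (simp add: o_def)
  also have "\<dots> \<le> (\<Sum>k<length fs. 1)" by (intro sum_mono, rule d) auto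
  finally show ?thesis by simp
qed

lemma coeff_0_prod_polys: "(\<And>f. f \<in> set fs \<Longrightarrow> coeff f 0 = 1) \<Longrightarrow> coeff (prod_polys fs) 0 = 1"
  by (simp add: prod_polys_def poly_0_coeff_0[symmetric] poly_prod)

lemma degree_cofactor_sum:
  assumes d: "\<And>f. f \<in> set fs \<Longrightarrow> degree f \<le> 1" and ne: "fs \<noteq> []"
  shows "degree (cofactor_sum fs us) < length fs"
proof -
  have "degree (cofactor_sum fs us) \<le> length fs - 1" unfolding cofactor_sum_def
  proof (intro degree_sum_le)
    fix i assume "i \<in> {..<length fs}"
    have "degree (\<Prod>k\<in>{..<length fs} - {i}. fs ! k) \<le> (\<Sum>k\<in>{..<length fs} - {i}. degree (fs ! k))"
      using degree_prod_sum_le[of "{..<length fs} - {i}" "\<lambda>k. fs ! k"] by (simp add: o_def)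
    also have "\<dots> \<le> (\<Sum>k\<in>{..<length fs} - {i}. 1)" by (intro sum_mono, rule d) auto
    also have "\<dots> = length fs - 1" using \<open>i \<in> _\<close> by simp
    finally show "degree (smult (us ! i) (\<Prod>k\<in>{..<length fs} - {i}. fs ! k)) \<le> length fs - 1"
      using degree_smult_le order_trans by blast
  qed simp
  then show ?thesis using ne by (cases fs) auto
qed

lemma Poly_coeffs_upto_cofactor_sum:
  assumes "\<And>f. f \<in> set fs \<Longrightarrow> degree f \<le> 1"
  shows "Poly (coeffs_upto (length fs) (cofactor_sum fs us)) = cofactor_sum fs us"
proof (cases "fs = []")
  case True then show ?thesis by (simp add: cofactor_sum_def coeffs_upto_def)
next
  case False then show ?thesis using degree_cofactor_sum[OF assms] by (simp add: Poly_coeffs_upto)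
qed

lemma poly_cofactor_sum_at_root:
  assumes i: "i < length fs" and z: "poly (fs ! i) z = 0"
  shows "poly (cofactor_sum fs us) z = us ! i * (\<Prod>k\<in>{..<length fs} - {i}. poly (fs ! k) z)"
proof -
  have "poly (cofactor_sum fs us) z = (\<Sum>j<length fs. us ! j * (\<Prod>k\<in>{..<length fs} - {j}. poly (fs ! k) z))"
    by (simp add: cofactor_sum_def poly_sum poly_prod)
  also have "\<dots> = us ! i * (\<Prod>k\<in>{..<length fs} - {i}. poly (fs ! k) z) +
      (\<Sum>j\<in>{..<length fs} - {i}. us ! j * (\<Prod>k\<in>{..<length fs} - {j}. poly (fs ! k) z))"
    using i by (subst sum.remove[of _ i]) auto
  also have "(\<Sum>j\<in>{..<length fs} - {i}. us ! j * (\<Prod>k\<in>{..<length fs} - {j}. poly (fs ! k) z)) = 0"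
  proof (intro sum.neutral ballI)
    fix j assume j: "j \<in> {..<length fs} - {i}"
    have "(\<Prod>k\<in>{..<length fs} - {j}. poly (fs ! k) z) = 0"
      using i j z by (intro prod_zero[of _ _]) (auto intro!: bexI[of _ i])
    then show "us ! j * (\<Prod>k\<in>{..<length fs} - {j}. poly (fs ! k) z) = 0" by simp
  qed
  finally show ?thesis by simp
qed

lemma coeff_cofactor_sum: "coeff (cofactor_sum fs us) i = (\<Sum>j<length fs. us ! j * coeff (\<Prod>k\<in>{..<length fs} - {j}. fs ! k) i)"
  by (simp add: cofactor_sum_def coeff_sum)

lemma divide_conquer_cost:
  fixes K :: nat
  assumes m: "2 \<le> m" and l: "l = m div 2" and r: "r = m - l"
    and b: "A \<le> K * l * (ceil_log2 l + 1)^2" "B \<le> K * r * (ceil_log2 r + 1)^2" "C \<le> K * m * (ceil_log2 m + 1)"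
  shows "A + B + C \<le> K * m * (ceil_log2 m + 1)^2"
proof -
  define c where "c = ceil_log2 ((m + 1) div 2)"
  have cm: "ceil_log2 m = Suc c" using ceil_log2_half[OF m] by (simp add: c_def)
  have rr: "r = (m + 1) div 2" using r l by simp
  have cr: "ceil_log2 r = c" using rr by (simp add: c_def)
  have log_l: "ceil_log2 l \<le> c" unfolding cr[symmetric] by (rule ceil_log2_mono) (simp add: l r)
  have X: "(ceil_log2 l + 1)^2 \<le> (c + 1)^2" using log_l by (simp add: power_mono)
  have A: "A \<le> K * l * (c + 1)^2" using b(1) mult_le_mono2[OF X, of "K * l"] by linarith
  have B: "B \<le> K * r * (c + 1)^2" using b(2) cr by simp
  have lr: "l + r = m" using l r by simp
  have "K * m * (c + 1)^2 = K * l * (c + 1)^2 + K * r * (c + 1)^2"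
    unfolding lr[symmetric] by (simp add: algebra_simps)
  then have AB: "A + B \<le> K * m * (c + 1)^2" using A B by linarith
  have C: "C \<le> K * m * (c + 2)" using b(3) cm by simp
  have "K * m * (c + 1)^2 + K * m * (c + 2) \<le> K * m * (c + 2)^2"
  proof -
    have "(c + 1)^2 + (c + 2) \<le> (c + 2)^2" by (simp add: power2_eq_square algebra_simps)
    then have "K * m * ((c + 1)^2 + (c + 2)) \<le> K * m * (c + 2)^2" by (rule mult_le_mono2)
    then show ?thesis by (simp add: algebra_simps)
  qed
  then have "A + B + C \<le> K * m * (c + 2)^2" using AB C by linarith
  then show ?thesis using cm by simp
qed

lemma realizable_divide_conquer:
  fixes F :: "'a list \<Rightarrow> complex list \<Rightarrow> complex list" and K :: nat
  assumes base: "\<And>xs. length xs \<le> 1 \<Longrightarrow> \<forall>x\<in>set xs. P x \<Longrightarrow> realizable (length xs) (length xs) 0 (F xs)"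
    and step: "\<And>L R A B. 1 \<le> length L \<Longrightarrow> 1 \<le> length R \<Longrightarrow> \<forall>x\<in>set (L @ R). P x \<Longrightarrow>
        realizable (length L) (length L) A (F L) \<Longrightarrow> realizable (length R) (length R) B (F R) \<Longrightarrow>
        realizable (length L + length R) (length L + length R)
          (A + B + K * (length L + length R) * (ceil_log2 (length L + length R) + 1)) (F (L @ R))"
    and P: "\<forall>x\<in>set xs. P x"
  shows "realizable (length xs) (length xs) (K * length xs * (ceil_log2 (length xs) + 1)^2) (F xs)"
  using P
proof (induction "length xs" arbitrary: xs rule: less_induct)
  case less
  show ?case
  proof (cases "length xs \<le> 1")
    case True
    then show ?thesis using base[OF True less.prems] realizable_mono by blast
  next
    case False
    define m where "m = length xs"
    define l where "l = m div 2"
    define r where "r = m - l"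
    have m: "2 \<le> m" and lr: "l < m" "r < m" "1 \<le> l" "1 \<le> r" using False by (auto simp: m_def l_def r_def)
    have IL: "realizable l l (K * l * (ceil_log2 l + 1)^2) (F (take l xs))"
      using less.hyps[of "take l xs"] less.prems lr by (auto simp: m_def dest: in_set_takeD)
    have IR: "realizable r r (K * r * (ceil_log2 r + 1)^2) (F (drop l xs))"
      using less.hyps[of "drop l xs"] less.prems lr by (auto simp: m_def r_def dest: in_set_dropD)
    have len: "length (take l xs) = l" "length (drop l xs) = r" "l + r = m"
      using lr by (auto simp: m_def r_def)
    note step' = step[of "take l xs" "drop l xs", unfolded len append_take_drop_id]
    have "realizable m m (K * l * (ceil_log2 l + 1)^2 + K * r * (ceil_log2 r + 1)^2 + K * m * (ceil_log2 m + 1)) (F xs)"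
      by (rule step'[OF _ _ _ IL IR]) (use lr less.prems in auto)
    then show ?thesis unfolding m_def[symmetric]
      by (rule realizable_mono) (rule divide_conquer_cost[OF m l_def r_def order_refl order_refl order_refl])
  qed
qed

lemma realizable_cofactor_sum:
  assumes "\<forall>f\<in>set fs. degree f \<le> 1"
  shows "realizable (length fs) (length fs) (33 * length fs * (ceil_log2 (length fs) + 1)^2)
    (\<lambda>us. coeffs_upto (length fs) (cofactor_sum fs us))"
proof (rule realizable_divide_conquer[where F = "\<lambda>fs us. coeffs_upto (length fs) (cofactor_sum fs us)"])
  fix fs :: "complex poly list" assume "length fs \<le> 1"
  then consider "fs = []" | f where "fs = [f]" by (cases fs) auto
  then show "realizable (length fs) (length fs) 0 (\<lambda>us. coeffs_upto (length fs) (cofactor_sum fs us))"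
  proof cases
    case 1 then show ?thesis by (intro realizable_rearrange) auto
  next
    case (2 f)
    have "realizable 1 1 0 (\<lambda>us. coeffs_upto 1 (cofactor_sum [f] us))" using realizable_id[of 1]
    proof (rule realizable_cong)
      fix us :: "complex list" assume "length us = 1"
      then obtain u where "us = [u]" by (cases us) (auto simp: length_Suc_conv)
      then show "coeffs_upto 1 (cofactor_sum [f] us) = us" by (simp add: cofactor_sum_def coeffs_upto_def)
    qed simp
    then show ?thesis by (simp add: 2)
  qed
next
  fix L R :: "complex poly list" and A B
  let ?l = "length L" and ?r = "length R" and ?m = "length L + length R"
  assume l: "1 \<le> ?l" and r: "1 \<le> ?r" and deg: "\<forall>f\<in>set (L @ R). degree f \<le> 1"
    and IL: "realizable ?l ?l A (\<lambda>us. coeffs_upto ?l (cofactor_sum L us))"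
    and IR: "realizable ?r ?r B (\<lambda>us. coeffs_upto ?r (cofactor_sum R us))"
  have dL: "\<forall>f\<in>set L. degree f \<le> 1" "\<forall>f\<in>set R. degree f \<le> 1" using deg by auto
  have p1: "realizable ?l ?m (poly_mult_cost ?m) (\<lambda>a. coeffs_upto ?m (Poly a * prod_polys R))"
    by (rule realizable_poly_mult[where lb="?r + 1"]) (use degree_prod_polys[of R] dL in auto)
  have p2: "realizable ?r ?m (poly_mult_cost ?m) (\<lambda>a. coeffs_upto ?m (Poly a * prod_polys L))"
    by (rule realizable_poly_mult[where lb="?l + 1"]) (use degree_prod_polys[of L] dL in auto)
  have B: "realizable ?m ?m (0 + poly_mult_cost ?m + (0 + poly_mult_cost ?m) + ?m)
     (\<lambda>ys. map (\<lambda>i. coeffs_upto ?m (Poly (take ?l ys) * prod_polys R) ! i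
                    + coeffs_upto ?m (Poly (drop ?l ys) * prod_polys L) ! i) [0..<?m])"
    by (rule realizable_add[OF realizable_comp[OF realizable_take p1] realizable_comp[OF realizable_drop p2]])
      simp_all
  have "realizable ?m ?m (A + B + (0 + poly_mult_cost ?m + (0 + poly_mult_cost ?m) + ?m))
      (\<lambda>us. coeffs_upto ?m (cofactor_sum (L @ R) us))"
  proof (rule realizable_cong[OF realizable_comp[OF realizable_parallel[OF IL IR] B]])
    fix us :: "complex list" assume us: "length us = ?m"
    have "cofactor_sum (L @ R) us =
        cofactor_sum L (take ?l us) * prod_polys R + cofactor_sum R (drop ?l us) * prod_polys L"
      using cofactor_sum_append[of "take ?l us" L "drop ?l us" R] us by simp
    then show "coeffs_upto ?m (cofactor_sum (L @ R) us) =
        map (\<lambda>i. coeffs_upto ?m (Poly (take ?l (coeffs_upto ?l (cofactor_sum L (take ?l us))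
                  @ coeffs_upto ?r (cofactor_sum R (drop ?l us)))) * prod_polys R) ! i
          + coeffs_upto ?m (Poly (drop ?l (coeffs_upto ?l (cofactor_sum L (take ?l us))
                  @ coeffs_upto ?r (cofactor_sum R (drop ?l us)))) * prod_polys L) ! i) [0..<?m]"
      using Poly_coeffs_upto_cofactor_sum dL by (auto intro!: nth_equalityI)
  qed simp
  moreover have "poly_mult_cost ?m \<le> 16 * ?m * (ceil_log2 ?m + 1)"
    using poly_mult_cost_bound[of ?m] l by simp
  ultimately show "realizable ?m ?m (A + B + 33 * ?m * (ceil_log2 ?m + 1))
      (\<lambda>us. coeffs_upto (length (L @ R)) (cofactor_sum (L @ R) us))"
    by (auto elim!: realizable_mono simp: algebra_simps)
qed (fact assms)

section \<open>Truncated power series and polynomial division\<close>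

definition agree_below :: "nat \<Rightarrow> complex poly \<Rightarrow> complex poly \<Rightarrow> bool" where
  "agree_below e p q \<longleftrightarrow> (\<forall>k<e. coeff p k = coeff q k)"

lemma agree_below_refl[simp]: "agree_below e p p" by (simp add: agree_below_def)

lemma agree_below_sym: "agree_below e p q \<Longrightarrow> agree_below e q p" by (simp add: agree_below_def)

lemma agree_below_trans: "agree_below e p q \<Longrightarrow> agree_below e q s \<Longrightarrow> agree_below e p s" by (simp add: agree_below_def)

lemma agree_below_mult: "agree_below e p q \<Longrightarrow> agree_below e (p * s) (q * s)"
  unfolding agree_below_def coeff_mult by (auto intro!: sum.cong)

lemma agree_below_mult_left: "agree_below e p q \<Longrightarrow> agree_below e (s * p) (s * q)"
  using agree_below_mult[of e p q s] by (simp add: mult.commute)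

lemma agree_below_sum: "(\<And>i. i \<in> A \<Longrightarrow> agree_below e (f i) (g i)) \<Longrightarrow> agree_below e (\<Sum>i\<in>A. f i) (\<Sum>i\<in>A. g i)"
  by (auto simp: agree_below_def coeff_sum intro: sum.cong)

lemma coeffs_upto_agree_below: "agree_below e p q \<Longrightarrow> coeffs_upto e p = coeffs_upto e q"
  by (auto simp: agree_below_def coeffs_upto_def)

lemma agree_below_truncation: "agree_below e (Poly (coeffs_upto e p)) p"
  by (auto simp: agree_below_def coeffs_upto_def nth_default_def)

lemma series_inverse_exists: "coeff P 0 = 1 \<Longrightarrow> \<exists>R. agree_below e (P * R) 1"
proof (induction e)
  case 0 then show ?case by (simp add: agree_below_def)
next
  case (Suc e)
  then obtain R where R: "agree_below e (P * R) 1" by blast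
  define c where "c = coeff (P * R) e - coeff 1 e"
  define R' where "R' = R - monom c e"
  have "coeff (P * R') k = coeff (P * R) k - (if k < e then 0 else c * coeff P (k - e))" for k
    by (simp add: R'_def right_diff_distrib coeff_monom_mult mult.commute[of P "monom c e"])
  then have "agree_below (Suc e) (P * R') 1" using R Suc.prems
    by (auto simp: agree_below_def c_def less_Suc_eq)
  then show ?case by blast
qed

definition reversal :: "nat \<Rightarrow> complex poly \<Rightarrow> complex poly" where
  "reversal k p = Poly (rev (coeffs_upto k p))"

lemma coeff_reversal: "coeff (reversal k p) i = (if i < k then coeff p (k - 1 - i) else 0)"
  by (simp add: reversal_def nth_default_def coeffs_upto_def rev_nth)

lemma poly_as_sum_below: "degree p < k \<Longrightarrow> poly p (z::complex) = (\<Sum>i<k. coeff p i * z ^ i)"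
proof -
  assume d: "degree p < k"
  have "poly p z = (\<Sum>i\<le>degree p. coeff p i * z ^ i)" by (simp add: poly_altdef)
  also have "\<dots> = (\<Sum>i<k. coeff p i * z ^ i)"
    by (rule sum.mono_neutral_left) (use d in \<open>auto simp: coeff_eq_0\<close>)
  finally show ?thesis .
qed

lemma degree_reversal: "degree (reversal k p) < max 1 k"
proof (cases "k = 0")
  case True then show ?thesis by (simp add: reversal_def coeffs_upto_def)
next
  case False
  have "degree (reversal k p) \<le> k - 1" by (rule degree_le) (auto simp: coeff_reversal)
  then show ?thesis using False by simp
qed

lemma poly_reversal:
  assumes "degree p < k" "z \<noteq> 0"
  shows "poly (reversal k p) z = z ^ (k - 1) * poly p (1 / z)"
proof (cases "k = 0")
  case True then show ?thesis using assms by simp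
next
  case False
  have "poly (reversal k p) z = (\<Sum>i<k. coeff (reversal k p) i * z ^ i)"
    using degree_reversal[of k p] False by (intro poly_as_sum_below) simp
  also have "\<dots> = (\<Sum>i<k. coeff p (k - 1 - i) * z ^ i)" by (simp add: coeff_reversal)
  also have "\<dots> = (\<Sum>i<k. coeff p i * z ^ (k - 1 - i))"
    using sum.nat_diff_reindex[of "\<lambda>i. coeff p (k - 1 - i) * z ^ i" k] by simp
  also have "\<dots> = (\<Sum>i<k. z ^ (k - 1) * (coeff p i * (1 / z) ^ i))"
  proof (intro sum.cong refl)
    fix i assume "i \<in> {..<k}"
    then have "z ^ (k - 1) = z ^ (k - 1 - i) * z ^ i" by (simp flip: power_add)
    then show "coeff p i * z ^ (k - 1 - i) = z ^ (k - 1) * (coeff p i * (1 / z) ^ i)"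
      using assms(2) by (simp add: power_one_over field_simps)
  qed
  also have "\<dots> = z ^ (k - 1) * poly p (1 / z)"
    using poly_as_sum_below[OF assms(1)] by (simp add: sum_distrib_left)
  finally show ?thesis .
qed

lemma poly_eqI_nonzero: "(\<And>z. z \<noteq> 0 \<Longrightarrow> poly p z = poly (q::complex poly) z) \<Longrightarrow> p = q"
proof (rule ccontr)
  assume h: "\<And>z. z \<noteq> 0 \<Longrightarrow> poly p z = poly q z" and ne: "p \<noteq> q"
  then have "p - q \<noteq> 0" by simp
  then have "finite {z. poly (p - q) z = 0}" by (rule poly_roots_finite)
  moreover have "{z::complex. z \<noteq> 0} \<subseteq> {z. poly (p - q) z = 0}" using h by auto
  moreover have "infinite {z::complex. z \<noteq> 0}"
  proof
    assume "finite {z::complex. z \<noteq> 0}"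
    then have "finite (insert 0 {z::complex. z \<noteq> 0})" by simp
    moreover have "insert 0 {z::complex. z \<noteq> 0} = UNIV" by auto
    ultimately show False using infinite_UNIV_char_0[where 'a=complex] by simp
  qed
  ultimately show False using finite_subset by blast
qed

lemma degree_div_less_diff:
  fixes p M :: "complex poly"
  assumes dp: "degree p < m" and dM: "degree M = d" and M0: "M \<noteq> 0" and dm: "d < m"
  shows "degree (p div M) < m - d"
proof (cases "p div M = 0")
  case False
  have "degree (p div M * M) = degree (p div M) + d" using degree_mult_eq[OF False M0] dM by simp
  moreover have "p div M * M = p - p mod M" by (simp add: minus_mod_eq_div_mult)
  then have "degree (p div M * M) < m"
    using degree_diff_le_max[of p "p mod M"] dp degree_mod_less[OF M0, of p] dM dm by auto
  ultimately show ?thesis by simp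
qed (use dm in simp)

lemma reversal_div_mod:
  fixes p M :: "complex poly"
  assumes dp: "degree p < m" and dM: "degree M = d" and M0: "M \<noteq> 0" and d1: "1 \<le> d" and dm: "d < m"
  shows "reversal m p = reversal (m - d) (p div M) * reversal (d + 1) M + monom 1 (m - d) * reversal d (p mod M)"
proof (rule poly_eqI_nonzero)
  fix z :: complex assume z: "z \<noteq> 0"
  define e q r where "e = m - d" and "q = p div M" and "r = p mod M"
  have dr: "degree r < d" using degree_mod_less[OF M0, of p] d1 dM by (auto simp: r_def)
  have dq: "degree q < e" unfolding q_def e_def by (rule degree_div_less_diff[OF dp dM M0 dm])
  have zm1: "z ^ (m - 1) = z ^ (e - 1) * z ^ d" and zm2: "z ^ (m - 1) = z ^ e * z ^ (d - 1)"
    using d1 dm by (simp_all add: e_def flip: power_add)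
  have "poly (reversal m p) z = z ^ (m - 1) * poly p (1 / z)" by (rule poly_reversal[OF dp z])
  also have "\<dots> = z ^ (m - 1) * poly q (1 / z) * poly M (1 / z) + z ^ (m - 1) * poly r (1 / z)"
    unfolding q_def r_def by (metis div_mult_mod_eq distrib_left mult.assoc poly_add poly_mult)
  also have "\<dots> = (z ^ (e - 1) * poly q (1 / z)) * (z ^ d * poly M (1 / z))
       + z ^ e * (z ^ (d - 1) * poly r (1 / z))"
    by (subst zm1, subst zm2) (simp add: mult_ac)
  also have "\<dots> = poly (reversal e q) z * poly (reversal (d + 1) M) z + z ^ e * poly (reversal d r) z"
    using poly_reversal[OF dq z] poly_reversal[of M "d + 1", OF _ z] poly_reversal[OF dr z] dM by simp
  finally show "poly (reversal m p) z =
      poly (reversal (m - d) (p div M) * reversal (d + 1) M + monom 1 (m - d) * reversal d (p mod M)) z"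
    by (simp add: poly_monom e_def q_def r_def)
qed

text \<open>Division without long division: the reversed quotient is the reversed dividend
  times the inverse series of the reversed divisor, modulo \<open>x\<^sup>m\<^sup>-\<^sup>d\<close>.\<close>
lemma div_via_reversal:
  fixes p M :: "complex poly"
  assumes dp: "degree p < m" and dM: "degree M = d" and M0: "M \<noteq> 0"
    and d1: "1 \<le> d" and dm: "d < m" and R: "agree_below (m - d) (reversal (d + 1) M * R) 1"
  shows "coeffs_upto (m - d) (reversal m p * R) = rev (coeffs_upto (m - d) (p div M))"
proof -
  define e q where "e = m - d" and "q = p div M"
  have "agree_below e (reversal m p) (reversal e q * reversal (d + 1) M)"
    unfolding reversal_div_mod[OF dp dM M0 d1 dm] agree_below_def e_def q_def
    by (simp add: coeff_monom_mult)
  then have "agree_below e (reversal m p * R) (reversal e q * (reversal (d + 1) M * R))"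
    unfolding mult.assoc[symmetric] by (rule agree_below_mult)
  moreover have "agree_below e (reversal e q * (reversal (d + 1) M * R)) (reversal e q * 1)"
    using R unfolding e_def[symmetric] by (rule agree_below_mult_left)
  ultimately have "agree_below e (reversal m p * R) (reversal e q)" using agree_below_trans by simp
  then have "coeffs_upto e (reversal m p * R) = coeffs_upto e (reversal e q)" by (rule coeffs_upto_agree_below)
  also have "\<dots> = rev (coeffs_upto e q)"
    by (auto simp: coeffs_upto_def coeff_reversal rev_nth intro!: nth_equalityI)
  finally show ?thesis by (simp add: e_def q_def)
qed

lemma realizable_poly_mod:
  assumes dM: "degree M = d" and mon: "coeff M d = 1" and d1: "1 \<le> d" and dm: "d < m"
  shows "realizable m d (poly_mult_cost (2 * m) + poly_mult_cost m + d) (\<lambda>a. coeffs_upto d (Poly a mod M))"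
proof -
  define e where "e = m - d"
  have c0: "coeff (reversal (d + 1) M) 0 = 1" using mon by (simp add: coeff_reversal)
  obtain R where R: "agree_below e (reversal (d + 1) M * R) 1" using series_inverse_exists[OF c0] by blast
  define R' where "R' = Poly (coeffs_upto e R)"
  have e1: "1 \<le> e" using dm by (simp add: e_def)
  have dR': "degree R' < e"
  proof -
    have "degree R' \<le> e - 1" unfolding R'_def by (rule degree_le) (auto simp: coeffs_upto_def nth_default_def)
    then show ?thesis using e1 by simp
  qed
  have S2: "realizable m e (poly_mult_cost (2 * m)) (\<lambda>b. coeffs_upto e (Poly b * R'))"
    by (rule realizable_poly_mult[OF dR']) (use dm in \<open>auto simp: e_def\<close>)
  have S4: "realizable e d (poly_mult_cost m) (\<lambda>c. coeffs_upto d (Poly c * M))"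
    by (rule realizable_poly_mult[where lb="d+1"]) (use dm dM in \<open>auto simp: e_def\<close>)
  define G where "G a = coeffs_upto d (Poly (rev (coeffs_upto e (Poly (rev a) * R'))) * M)" for a
  have g: "realizable m d (0 + poly_mult_cost (2 * m) + 0 + poly_mult_cost m) G"
    unfolding G_def by (rule realizable_comp[OF realizable_comp[OF realizable_comp[OF realizable_rev S2] realizable_rev] S4])
  have all: "realizable m d (0 + (0 + poly_mult_cost (2 * m) + 0 + poly_mult_cost m) + d) (\<lambda>a. map (\<lambda>i. take d a ! i - G a ! i) [0..<d])"
    by (rule realizable_diff[OF realizable_take g]) (use dm in simp)
  show ?thesis
  proof (rule realizable_cong[OF all])
    fix a :: "complex list" assume a: "length a = m"
    define p where "p = Poly a"
    have ca: "coeffs_upto m p = a" using a by (simp add: p_def coeffs_upto_Poly)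
    have dp: "degree p < m"
    proof -
      have "degree p \<le> m - 1" unfolding p_def by (rule degree_le) (use a in \<open>auto simp: nth_default_def\<close>)
      then show ?thesis using dm by linarith
    qed
    have M0: "M \<noteq> 0" using mon by auto
    note quotient = div_via_reversal[OF dp dM M0 d1 dm R[unfolded e_def]]
    have "coeffs_upto e (Poly (rev a) * R') = coeffs_upto e (reversal m p * R)"
    proof -
      have "Poly (rev a) = reversal m p" using ca by (simp add: reversal_def)
      moreover have "agree_below e (reversal m p * R') (reversal m p * R)" unfolding R'_def by (rule agree_below_mult_left[OF agree_below_truncation])
      ultimately show ?thesis by (simp add: coeffs_upto_agree_below)
    qed
    also have "\<dots> = rev (coeffs_upto e (p div M))" using quotient by (simp add: e_def)
    finally have "Poly (rev (coeffs_upto e (Poly (rev a) * R'))) = p div M"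
      using degree_div_less_diff[OF dp dM M0 dm] by (simp add: Poly_coeffs_upto e_def)
    then have G: "G a = coeffs_upto d ((p div M) * M)" by (simp add: G_def)
    show "coeffs_upto d (Poly a mod M) = map (\<lambda>i. take d a ! i - G a ! i) [0..<d]"
    proof -
      have pmd: "Poly a mod M = Poly a - Poly a div M * M" by (simp add: minus_div_mult_eq_mod)
      show ?thesis using a dm unfolding G pmd by (auto simp: coeffs_upto_def nth_default_def p_def intro!: nth_equalityI)
    qed
  qed simp
qed

section \<open>Multipoint evaluation\<close>

definition root_factor :: "complex \<Rightarrow> complex poly" where "root_factor t = [:-t, 1:]"

definition recip_root_factor :: "complex \<Rightarrow> complex poly" where "recip_root_factor t = [:1, -t:]"

lemma poly_root_factor[simp]: "poly (root_factor t) z = z - t" by (simp add: root_factor_def)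

lemma poly_recip_root_factor[simp]: "poly (recip_root_factor t) z = 1 - t * z" by (simp add: recip_root_factor_def)

definition node_poly :: "complex list \<Rightarrow> complex poly" where "node_poly ts = prod_polys (map root_factor ts)"

lemma node_poly_Cons: "node_poly (t # ts) = root_factor t * node_poly ts"
  using prod_polys_append[of "[root_factor t]" "map root_factor ts"] by (simp add: node_poly_def prod_polys_def)

lemma degree_lead_coeff_node_poly: "degree (node_poly ts) = length ts \<and> coeff (node_poly ts) (length ts) = 1"
proof (induction ts)
  case Nil then show ?case by (simp add: node_poly_def prod_polys_def)
next
  case (Cons t ts)
  have n0: "node_poly ts \<noteq> 0" using Cons by auto
  have "degree (node_poly (t # ts)) = 1 + degree (node_poly ts)" unfolding node_poly_Cons
    by (subst degree_mult_eq) (auto simp: root_factor_def n0)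
  moreover have "lead_coeff (node_poly (t # ts)) = 1"
  proof -
    have "lead_coeff (node_poly (t # ts)) = lead_coeff (root_factor t) * lead_coeff (node_poly ts)"
      unfolding node_poly_Cons by (rule lead_coeff_mult)
    moreover have "lead_coeff (root_factor t) = 1" by (simp add: root_factor_def)
    ultimately show ?thesis using Cons by simp
  qed
  ultimately show ?case using Cons by simp
qed

lemma poly_node_poly_root: "t \<in> set ts \<Longrightarrow> poly (node_poly ts) t = 0"
  by (induction ts) (auto simp: node_poly_Cons root_factor_def)

lemma poly_mod_at_root: "poly M t = 0 \<Longrightarrow> poly (p mod M) t = poly p (t::complex)"
proof -
  assume "poly M t = 0"
  moreover have "p = p div M * M + p mod M" by simp
  then have "poly p t = poly (p div M) t * poly M t + poly (p mod M) t" by (metis poly_add poly_mult)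
  ultimately show ?thesis by simp
qed

lemma poly_coeffs_upto_mod_node_poly:
  assumes "t \<in> set X"
  shows "poly (Poly (coeffs_upto (length X) (p mod node_poly X))) t = poly p t"
proof -
  have M0: "node_poly X \<noteq> 0" and dM: "degree (node_poly X) = length X"
    using degree_lead_coeff_node_poly[of X] assms by auto
  have "degree (p mod node_poly X) < length X"
    using degree_mod_less[OF M0, of p] dM assms by (cases X) auto
  then have "Poly (coeffs_upto (length X) (p mod node_poly X)) = p mod node_poly X"
    by (rule Poly_coeffs_upto)
  then show ?thesis using poly_mod_at_root[OF poly_node_poly_root[OF assms]] by simp
qed

lemma realizable_multipoint_eval:
  "realizable (length ts) (length ts) (257 * length ts * (ceil_log2 (length ts) + 1)^2)
    (\<lambda>a. map (poly (Poly a)) ts)"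
proof (rule realizable_divide_conquer[where F = "\<lambda>ts a. map (poly (Poly a)) ts" and P = "\<lambda>_. True"])
  fix ts :: "complex list" assume "length ts \<le> 1"
  then consider "ts = []" | t where "ts = [t]" by (cases ts) auto
  then show "realizable (length ts) (length ts) 0 (\<lambda>a. map (poly (Poly a)) ts)"
  proof cases
    case 1 then show ?thesis by (intro realizable_rearrange) auto
  next
    case (2 t)
    have "realizable 1 1 0 (\<lambda>a. map (poly (Poly a)) [t])" using realizable_id[of 1]
    proof (rule realizable_cong)
      fix a :: "complex list" assume "length a = 1"
      then obtain u where "a = [u]" by (cases a) (auto simp: length_Suc_conv)
      then show "map (poly (Poly a)) [t] = a" by simp
    qed simp
    then show ?thesis by (simp add: 2)
  qed
next
  fix L R :: "complex list" and A B
  let ?l = "length L" and ?r = "length R" and ?m = "length L + length R"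
  assume l: "1 \<le> ?l" and r: "1 \<le> ?r"
    and IL: "realizable ?l ?l A (\<lambda>a. map (poly (Poly a)) L)"
    and IR: "realizable ?r ?r B (\<lambda>a. map (poly (Poly a)) R)"
  have A1: "realizable ?m ?l (poly_mult_cost (2 * ?m) + poly_mult_cost ?m + ?l)
      (\<lambda>a. coeffs_upto ?l (Poly a mod node_poly L))"
    by (rule realizable_poly_mod) (use degree_lead_coeff_node_poly[of L] l r in auto)
  have A2: "realizable ?m ?r (poly_mult_cost (2 * ?m) + poly_mult_cost ?m + ?r)
      (\<lambda>a. coeffs_upto ?r (Poly a mod node_poly R))"
    by (rule realizable_poly_mod) (use degree_lead_coeff_node_poly[of R] l r in auto)
  have "realizable ?m ?m ((poly_mult_cost (2 * ?m) + poly_mult_cost ?m + ?l)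
      + (poly_mult_cost (2 * ?m) + poly_mult_cost ?m + ?r) + (A + B)) (\<lambda>a. map (poly (Poly a)) (L @ R))"
  proof (rule realizable_cong[OF realizable_comp[OF realizable_append[OF A1 A2] realizable_parallel[OF IL IR]]])
    fix a :: "complex list"
    show "map (poly (Poly a)) (L @ R) = map (poly (Poly (take ?l (coeffs_upto ?l (Poly a mod node_poly L)
        @ coeffs_upto ?r (Poly a mod node_poly R))))) L @ map (poly (Poly (drop ?l (coeffs_upto ?l
        (Poly a mod node_poly L) @ coeffs_upto ?r (Poly a mod node_poly R))))) R"
      by (simp add: poly_coeffs_upto_mod_node_poly)
  qed simp
  moreover have "2 * poly_mult_cost (2 * ?m) + 2 * poly_mult_cost ?m + ?m \<le> 257 * ?m * (ceil_log2 ?m + 1)"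
  proof -
    have "1 \<le> ?m" using l by simp
    then have "poly_mult_cost (2 * ?m) \<le> 64 * (?m * (ceil_log2 ?m + 1))"
      using poly_mult_cost_double[of ?m] by (simp only: mult.assoc)
    moreover have "poly_mult_cost ?m \<le> poly_mult_cost (2 * ?m)" by (rule poly_mult_cost_mono) simp
    moreover have "?m \<le> ?m * (ceil_log2 ?m + 1)" by simp
    ultimately show ?thesis unfolding mult.assoc by linarith
  qed
  ultimately show "realizable ?m ?m (A + B + 257 * ?m * (ceil_log2 ?m + 1)) (\<lambda>a. map (poly (Poly a)) (L @ R))"
    by (elim realizable_mono) linarith
qed simp

section \<open>Vandermonde matrices with distinct nonzero nodes\<close>

lemma poly_eq_0_if_roots:
  fixes p :: "complex poly"
  assumes d: "degree p < length ts" and dist: "distinct ts" and r: "\<And>t. t \<in> set ts \<Longrightarrow> poly p t = 0"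
  shows "p = 0"
proof (rule ccontr)
  assume p: "p \<noteq> 0"
  have "set ts \<subseteq> {x. poly p x = 0}" using r by auto
  then have "card (set ts) \<le> card {x. poly p x = 0}"
    by (rule card_mono[OF poly_roots_finite[OF p]])
  also have "\<dots> \<le> degree p" by (rule card_poly_roots_bound[OF p])
  finally show False using d dist by (simp add: distinct_card)
qed

definition geom_poly :: "nat \<Rightarrow> complex \<Rightarrow> complex poly" where
  "geom_poly n t = Poly (map (\<lambda>j. t ^ j) [0..<n])"

lemma coeff_geom_poly: "coeff (geom_poly n t) j = (if j < n then t ^ j else 0)"
  by (simp add: geom_poly_def nth_default_def)

lemma geom_poly_inverse: "agree_below n ([:1, -t:] * geom_poly n t) 1"
proof -
  have "[:1, -t:] * geom_poly n t = geom_poly n t + pCons 0 (smult (-t) (geom_poly n t))" by simp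
  then show ?thesis unfolding agree_below_def
    by (auto simp: coeff_geom_poly coeff_pCons split: nat.splits)
qed

text \<open>Coefficient \<open>j < n\<close> of \<open>\<Sum>\<^sub>i u\<^sub>i / (1 - t\<^sub>i x)\<close> is \<open>(V\<^sup>T u)\<^sub>j\<close>; multiplying by
  \<open>\<Prod>\<^sub>i (1 - t\<^sub>i x)\<close> clears the denominators.\<close>
lemma prod_times_geom_sums:
  assumes len: "length us = length ts"
  defines "fs \<equiv> map recip_root_factor ts"
  shows "agree_below n (prod_polys fs * (\<Sum>i<length ts. smult (us ! i) (geom_poly n (ts ! i)))) (cofactor_sum fs us)"
proof -
  have "prod_polys fs * (\<Sum>i<length ts. smult (us ! i) (geom_poly n (ts ! i))) =
        (\<Sum>i<length ts. smult (us ! i) (\<Prod>k\<in>{..<length fs} - {i}. fs ! k) * (fs ! i * geom_poly n (ts ! i)))"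
    unfolding sum_distrib_left
  proof (intro sum.cong refl)
    fix i assume i: "i \<in> {..<length ts}"
    have "prod_polys fs = fs ! i * (\<Prod>k\<in>{..<length fs} - {i}. fs ! k)"
      unfolding prod_polys_def using i by (subst prod.remove[of _ i]) (auto simp: fs_def)
    then show "prod_polys fs * smult (us ! i) (geom_poly n (ts ! i)) =
        smult (us ! i) (\<Prod>k\<in>{..<length fs} - {i}. fs ! k) * (fs ! i * geom_poly n (ts ! i))"
      by (simp add: mult_ac)
  qed
  also have "agree_below n \<dots> (\<Sum>i<length ts. smult (us ! i) (\<Prod>k\<in>{..<length fs} - {i}. fs ! k) * 1)"
  proof (rule agree_below_sum)
    fix i assume "i \<in> {..<length ts}"
    then have "agree_below n (fs ! i * geom_poly n (ts ! i)) 1" using geom_poly_inverse by (simp add: fs_def recip_root_factor_def)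
    then show "agree_below n (smult (us ! i) (\<Prod>k\<in>{..<length fs} - {i}. fs ! k) * (fs ! i * geom_poly n (ts ! i)))
        (smult (us ! i) (\<Prod>k\<in>{..<length fs} - {i}. fs ! k) * 1)" by (rule agree_below_mult_left)
  qed
  also have "(\<Sum>i<length ts. smult (us ! i) (\<Prod>k\<in>{..<length fs} - {i}. fs ! k) * 1) = cofactor_sum fs us"
    by (simp add: cofactor_sum_def fs_def)
  finally show ?thesis .
qed

lemma poly_Poly_sum: "length a = n \<Longrightarrow> poly (Poly a) (z::complex) = (\<Sum>j<n. a ! j * z ^ j)"
proof (cases "n = 0")
  case True then show "length a = n \<Longrightarrow> ?thesis" by simp
next
  case False
  assume a: "length a = n"
  have "degree (Poly a) \<le> n - 1" by (rule degree_le) (use a in \<open>auto simp: nth_default_def\<close>)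
  then have "degree (Poly a) < n" using False by linarith
  then show ?thesis using poly_as_sum_below[of "Poly a" n z] a by (simp add: nth_default_def)
qed

lemma realizable_vandermonde:
  assumes "length ts = n"
  shows "realizable n n (257 * n * (ceil_log2 n + 1)^2) (\<lambda>a. map (\<lambda>i. \<Sum>j<n. (ts ! i) ^ j * a ! j) [0..<n])"
  using realizable_multipoint_eval[of ts] unfolding assms
proof (rule realizable_cong)
  fix a :: "complex list" assume "length a = n"
  then show "map (\<lambda>i. \<Sum>j<n. (ts ! i) ^ j * a ! j) [0..<n] = map (poly (Poly a)) ts"
    using assms by (auto simp: poly_Poly_sum mult.commute intro!: nth_equalityI)
qed simp

lemma realizable_vandermonde_transp:
  assumes len: "length ts = n"
  shows "realizable n n (33 * n * (ceil_log2 n + 1)^2 + poly_mult_cost (2 * n)) (\<lambda>u. map (\<lambda>j. \<Sum>i<n. (ts ! i) ^ j * u ! i) [0..<n])"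
proof -
  define fs where "fs = map recip_root_factor ts"
  have dfs: "\<forall>f\<in>set fs. degree f \<le> 1" by (auto simp: fs_def recip_root_factor_def)
  have "coeff (prod_polys fs) 0 = 1" by (rule coeff_0_prod_polys) (auto simp: fs_def recip_root_factor_def)
  then obtain Dinv where Dinv: "agree_below n (prod_polys fs * Dinv) 1" using series_inverse_exists by blast
  define D' where "D' = Poly (coeffs_upto n Dinv)"
  have dD': "degree D' < n + 1"
  proof -
    have "degree D' \<le> n" unfolding D'_def by (rule degree_le) (auto simp: coeffs_upto_def nth_default_def)
    then show ?thesis by simp
  qed
  have T: "realizable n n (33 * n * (ceil_log2 n + 1)^2) (\<lambda>us. coeffs_upto n (cofactor_sum fs us))"
    using realizable_cofactor_sum[OF dfs] len by (simp add: fs_def)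
  have P: "realizable n n (poly_mult_cost (2 * n)) (\<lambda>a. coeffs_upto n (Poly a * D'))"
    by (rule realizable_poly_mult[OF dD']) auto
  show ?thesis
  proof (rule realizable_cong[OF realizable_comp[OF T P]])
    fix u :: "complex list" assume u: "length u = n"
    define G where "G = (\<Sum>i<length ts. smult (u ! i) (geom_poly n (ts ! i)))"
    have VT: "agree_below n (prod_polys fs * G) (cofactor_sum fs u)" unfolding G_def fs_def by (rule prod_times_geom_sums) (simp add: u len)
    have "agree_below n (Poly (coeffs_upto n (cofactor_sum fs u)) * D') (cofactor_sum fs u * Dinv)"
    proof -
      have "agree_below n (Poly (coeffs_upto n (cofactor_sum fs u)) * D') (cofactor_sum fs u * D')" by (rule agree_below_mult[OF agree_below_truncation])
      moreover have "agree_below n (cofactor_sum fs u * D') (cofactor_sum fs u * Dinv)" unfolding D'_def by (rule agree_below_mult_left[OF agree_below_truncation])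
      ultimately show ?thesis by (rule agree_below_trans)
    qed
    moreover have "agree_below n (cofactor_sum fs u * Dinv) (prod_polys fs * G * Dinv)" by (rule agree_below_mult[OF agree_below_sym[OF VT]])
    moreover have "prod_polys fs * G * Dinv = G * (prod_polys fs * Dinv)" by (simp add: mult_ac)
    moreover have "agree_below n (G * (prod_polys fs * Dinv)) (G * 1)" by (rule agree_below_mult_left[OF Dinv])
    ultimately have "agree_below n (Poly (coeffs_upto n (cofactor_sum fs u)) * D') G" by (metis agree_below_trans mult_1_right)
    then have "coeffs_upto n (Poly (coeffs_upto n (cofactor_sum fs u)) * D') = coeffs_upto n G" by (rule coeffs_upto_agree_below)
    also have "\<dots> = map (\<lambda>j. \<Sum>i<n. (ts ! i) ^ j * u ! i) [0..<n]"
      by (auto simp: coeffs_upto_def G_def coeff_sum coeff_geom_poly len mult.commute intro!: nth_equalityI)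
    finally show "map (\<lambda>j. \<Sum>i<n. (ts ! i) ^ j * u ! i) [0..<n] = coeffs_upto n (Poly (coeffs_upto n (cofactor_sum fs u)) * D')" by simp
  qed simp
qed

lemma realizable_vandermonde_inv:
  assumes len: "length ts = n" and cs: "length cs = n"
  shows "realizable n n (n + 33 * n * (ceil_log2 n + 1)^2) (\<lambda>y. coeffs_upto n (cofactor_sum (map root_factor ts) (map (\<lambda>i. y ! i * cs ! i) [0..<n])))"
proof -
  have T: "realizable n n (33 * n * (ceil_log2 n + 1)^2) (\<lambda>us. coeffs_upto n (cofactor_sum (map root_factor ts) us))"
    using realizable_cofactor_sum[of "map root_factor ts"] len by (simp add: root_factor_def)
  show ?thesis by (rule realizable_comp[OF realizable_scale[OF cs] T])
qed

lemma realizable_vandermonde_transp_inv: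
  assumes len: "length ts = n" and cs: "length cs = n"
  shows "realizable n n (poly_mult_cost (2 * n) + 257 * n * (ceil_log2 n + 1)^2 + n)
    (\<lambda>a. map (\<lambda>i. poly (Poly (coeffs_upto n (Poly a * prod_polys (map recip_root_factor ts)))) (1 / ts ! i) * cs ! i) [0..<n])"
proof -
  have "degree (prod_polys (map recip_root_factor ts)) \<le> length (map recip_root_factor ts)" by (rule degree_prod_polys) (auto simp: recip_root_factor_def)
  then have dD: "degree (prod_polys (map recip_root_factor ts)) < n + 1" using len by simp
  have P: "realizable n n (poly_mult_cost (2 * n)) (\<lambda>a. coeffs_upto n (Poly a * prod_polys (map recip_root_factor ts)))"
    by (rule realizable_poly_mult[OF dD]) auto
  have E: "realizable n n (257 * n * (ceil_log2 n + 1)^2) (\<lambda>a. map (poly (Poly a)) (map (\<lambda>t. 1 / t) ts))"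
    using realizable_multipoint_eval[of "map (\<lambda>t. 1 / t) ts"] len by simp
  show ?thesis
  proof (rule realizable_cong[OF realizable_comp[OF realizable_comp[OF P E] realizable_scale[OF cs]]])
    fix a :: "complex list" assume "length a = n"
    then show "map (\<lambda>i. poly (Poly (coeffs_upto n (Poly a * prod_polys (map recip_root_factor ts)))) (1 / ts ! i) * cs ! i) [0..<n] =
      map (\<lambda>i. map (poly (Poly (coeffs_upto n (Poly a * prod_polys (map recip_root_factor ts))))) (map (\<lambda>t. 1 / t) ts) ! i * cs ! i) [0..<n]"
      using len by (auto intro!: nth_equalityI)
  qed simp
qed

lemma realizable_imp_computes:
  assumes "realizable n n c F" and "\<And>xs i. length xs = n \<Longrightarrow> i < n \<Longrightarrow> F xs ! i = (\<Sum>j<n. M i j * xs ! j)"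
  shows "\<exists>P. computes n (mat_vec n M) P \<and> cost P \<le> c"
proof -
  obtain P where P: "cost P \<le> c" "length (snd P) = n" "\<And>u i. i < n \<Longrightarrow> exec P u i = F (map u [0..<n]) ! i"
    using assms(1) unfolding realizable_def by blast
  have "computes n (mat_vec n M) P" unfolding computes_def
  proof (intro conjI allI impI)
    fix u i assume "unit_vec n u" "i < n"
    then show "exec P u i = mat_vec n M u i" using P(3) assms(2)[of "map u [0..<n]" i]
      by (simp add: mat_vec_def)
  qed (rule P(2))
  then show ?thesis using P(1) by blast
qed

lemma alpha_le_if_realizable:
  assumes "realizable n n c F" and "\<And>xs i. length xs = n \<Longrightarrow> i < n \<Longrightarrow> F xs ! i = (\<Sum>j<n. M i j * xs ! j)"
  shows "alpha n M \<le> enat c"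
proof -
  obtain P where P: "computes n (mat_vec n M) P" "cost P \<le> c" using realizable_imp_computes[OF assms] by blast
  then have "alpha n M \<le> enat (cost P)" unfolding alpha_def by (intro Inf_lower) blast
  then show ?thesis using P(2) by (simp add: order_trans)
qed

lemma is_inverse_unique:
  assumes B: "is_inverse n A B" and C: "is_inverse n A C" and i: "i < n" and j: "j < n"
  shows "B i j = C i j"
proof -
  have "B i j = (\<Sum>k<n. B i k * (if k = j then 1 else 0))" using j by (simp add: if_distrib cong: if_cong)
  also have "\<dots> = (\<Sum>k<n. B i k * (\<Sum>l<n. A k l * C l j))"
    using C j unfolding is_inverse_def by (intro sum.cong refl) simp
  also have "\<dots> = (\<Sum>l<n. (\<Sum>k<n. B i k * A k l) * C l j)"
    by (simp add: sum_distrib_left sum_distrib_right mult_ac) (rule sum.swap)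
  also have "\<dots> = (\<Sum>l<n. (if i = l then 1 else 0) * C l j)"
    using B i unfolding is_inverse_def by (intro sum.cong refl) simp
  also have "\<dots> = (\<Sum>l<n. if i = l then C l j else 0)" by (intro sum.cong) auto
  also have "\<dots> = C i j" using i by simp
  finally show ?thesis .
qed

lemma beta_le_if_realizable:
  assumes inv: "is_inverse n M N" and "realizable n n c F"
    and "\<And>xs i. length xs = n \<Longrightarrow> i < n \<Longrightarrow> F xs ! i = (\<Sum>j<n. N i j * xs ! j)"
  shows "beta n M \<le> enat c"
proof -
  have invM: "invertible_n n M" using inv by (auto simp: invertible_n_def)
  have mi: "is_inverse n M (mat_inv n M)" unfolding mat_inv_def by (rule someI[of "is_inverse n M", OF inv])
  have "\<And>xs i. length xs = n \<Longrightarrow> i < n \<Longrightarrow> F xs ! i = (\<Sum>j<n. mat_inv n M i j * xs ! j)"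
    using assms(3) is_inverse_unique[OF inv mi] by simp
  then obtain P where P: "computes n (mat_vec n (mat_inv n M)) P" "cost P \<le> c"
    using realizable_imp_computes[OF assms(2)] by blast
  have mem: "enat (cost P) \<in> {enat (cost P) | P. computes n (mat_vec n (mat_inv n M)) P}" using P(1) by blast
  have "beta n M \<le> enat (cost P)" unfolding beta_def if_P[OF invM] by (rule Inf_lower[OF mem])
  then show ?thesis using P(2) by (simp add: order_trans)
qed

lemma is_inverse_apply:
  assumes inv: "is_inverse n A B" and xs: "length xs = n"
  shows "map (\<lambda>i. \<Sum>k<n. A i k * (\<Sum>l<n. B k l * xs ! l)) [0..<n] = xs"
proof (rule nth_equalityI)
  fix i assume "i < length (map (\<lambda>i. \<Sum>k<n. A i k * (\<Sum>l<n. B k l * xs ! l)) [0..<n])"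
  then have i: "i < n" by simp
  have "(\<Sum>k<n. A i k * (\<Sum>l<n. B k l * xs ! l)) = (\<Sum>l<n. (\<Sum>k<n. A i k * B k l) * xs ! l)"
    by (simp add: sum_distrib_left sum_distrib_right mult_ac) (rule sum.swap)
  also have "\<dots> = (\<Sum>l<n. (if i = l then 1 else 0) * xs ! l)"
    using inv i unfolding is_inverse_def by (intro sum.cong refl) simp
  also have "\<dots> = (\<Sum>l<n. if l = i then xs ! l else 0)" by (intro sum.cong) auto
  also have "\<dots> = xs ! i" using i by simp
  finally show "map (\<lambda>i. \<Sum>k<n. A i k * (\<Sum>l<n. B k l * xs ! l)) [0..<n] ! i = xs ! i" using i by simp
qed (simp add: xs)

lemma is_inverse_transp: "is_inverse n A B \<Longrightarrow> is_inverse n (transp A) (transp B)"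
  unfolding is_inverse_def transp_def by (simp add: mult.commute)

text \<open>Lagrange interpolation: column \<open>j\<close> of \<open>V\<^sup>-\<^sup>1\<close> holds the coefficients of
  \<open>\<Prod>\<^sub>k\<^sub>\<noteq>\<^sub>j (x - t\<^sub>k) / \<Prod>\<^sub>k\<^sub>\<noteq>\<^sub>j (t\<^sub>j - t\<^sub>k)\<close>.\<close>
definition node_cofactor :: "complex list \<Rightarrow> nat \<Rightarrow> complex poly" where
  "node_cofactor ts j = (\<Prod>k\<in>{..<length ts} - {j}. map root_factor ts ! k)"

definition node_weight :: "complex list \<Rightarrow> nat \<Rightarrow> complex" where
  "node_weight ts j = poly (node_cofactor ts j) (ts ! j)"

definition vandermonde_inv :: "complex list \<Rightarrow> nat \<Rightarrow> nat \<Rightarrow> complex" where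
  "vandermonde_inv ts i j = coeff (node_cofactor ts j) i / node_weight ts j"

lemma poly_node_cofactor: "poly (node_cofactor ts j) z = (\<Prod>k\<in>{..<length ts} - {j}. z - ts ! k)"
  by (simp add: node_cofactor_def poly_prod)

lemma poly_node_cofactor_at_node:
  assumes "i < length ts" "j < length ts"
  shows "poly (node_cofactor ts j) (ts ! i) = (if i = j then node_weight ts j else 0)"
proof (cases "i = j")
  case False
  then show ?thesis using assms unfolding poly_node_cofactor
    by (auto intro!: prod_zero bexI[of _ i])
qed (simp add: node_weight_def)

lemma node_weight_nonzero: "distinct ts \<Longrightarrow> j < length ts \<Longrightarrow> node_weight ts j \<noteq> 0"
  unfolding node_weight_def poly_node_cofactor by (auto simp: nth_eq_iff_index_eq)

lemma degree_node_cofactor: assumes "j < length ts" shows "degree (node_cofactor ts j) < length ts"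
proof -
  have "degree (node_cofactor ts j) \<le> (\<Sum>k\<in>{..<length ts} - {j}. degree (map root_factor ts ! k))"
    unfolding node_cofactor_def using degree_prod_sum_le[of "{..<length ts} - {j}" "\<lambda>k. map root_factor ts ! k"] by (simp add: o_def)
  also have "\<dots> \<le> (\<Sum>k\<in>{..<length ts} - {j}. 1)" by (intro sum_mono) (simp add: root_factor_def)
  also have "\<dots> = length ts - 1" using assms by simp
  finally show ?thesis using assms by linarith
qed

lemma is_inverse_vandermonde_inv:
  assumes dist: "distinct ts"
  shows "is_inverse (length ts) (vandermonde (\<lambda>i. ts ! i)) (vandermonde_inv ts)"
  unfolding is_inverse_def
proof (intro conjI allI impI)
  let ?n = "length ts"
  fix i j assume i: "i < ?n" and j: "j < ?n"
  have "(\<Sum>k<?n. vandermonde (\<lambda>i. ts ! i) i k * vandermonde_inv ts k j) = (\<Sum>k<?n. coeff (node_cofactor ts j) k * (ts ! i) ^ k) / node_weight ts j"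
    by (simp add: vandermonde_def vandermonde_inv_def sum_divide_distrib mult.commute)
  also have "\<dots> = poly (node_cofactor ts j) (ts ! i) / node_weight ts j" using poly_as_sum_below[OF degree_node_cofactor[OF j]] by simp
  also have "\<dots> = (if i = j then 1 else 0)" using poly_node_cofactor_at_node[OF i j] node_weight_nonzero[OF dist j] by simp
  finally show "(\<Sum>k<?n. vandermonde (\<lambda>i. ts ! i) i k * vandermonde_inv ts k j) = (if i = j then 1 else 0)" .
next
  let ?n = "length ts"
  fix i j assume i: "i < ?n" and j: "j < ?n"
  define us where "us = map (\<lambda>k. (ts ! k) ^ j / node_weight ts k) [0..<?n]"
  define H where "H = cofactor_sum (map root_factor ts) us"
  have cH: "coeff H i = (\<Sum>k<?n. vandermonde_inv ts i k * vandermonde (\<lambda>i. ts ! i) k j)"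
    unfolding H_def coeff_cofactor_sum by (simp add: us_def vandermonde_inv_def vandermonde_def node_cofactor_def mult_ac)
  have "H - monom 1 j = 0"
  proof (rule poly_eq_0_if_roots[OF _ dist])
    have "degree (cofactor_sum (map root_factor ts) us) < length (map root_factor ts)" by (rule degree_cofactor_sum) (use i in \<open>auto simp: root_factor_def\<close>)
    then have "degree H < ?n" by (simp add: H_def)
    moreover have "degree (monom (1::complex) j) < ?n" using j by (simp add: degree_monom_eq)
    ultimately show "degree (H - monom 1 j) < ?n" using degree_diff_le_max[of H "monom 1 j"] by linarith
  next
    fix t assume "t \<in> set ts"
    then obtain m where m: "m < ?n" "t = ts ! m" by (auto simp: in_set_conv_nth)
    have "poly H t = us ! m * (\<Prod>k\<in>{..<?n} - {m}. poly (map root_factor ts ! k) (ts ! m))"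
      unfolding H_def m(2) by (subst poly_cofactor_sum_at_root) (use m in auto)
    also have "(\<Prod>k\<in>{..<?n} - {m}. poly (map root_factor ts ! k) (ts ! m)) = node_weight ts m"
      by (simp add: node_weight_def node_cofactor_def poly_prod)
    finally have "poly H t = (ts ! m) ^ j" using node_weight_nonzero[OF dist m(1)] m by (simp add: us_def)
    then show "poly (H - monom 1 j) t = 0" using m by (simp add: poly_monom)
  qed
  then have "H = monom 1 j" by simp
  then show "(\<Sum>k<?n. vandermonde_inv ts i k * vandermonde (\<lambda>i. ts ! i) k j) = (if i = j then 1 else 0)"
    using cH by (auto simp: coeff_monom split: if_splits)
qed

text \<open>Inverting \<open>V\<^sup>T\<close>: the numerator \<open>\<Sum>\<^sub>i u\<^sub>i \<Prod>\<^sub>k\<^sub>\<noteq>\<^sub>i (1 - t\<^sub>k x)\<close> has degree \<open>< n\<close>, so it is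
  recovered from \<open>a = V\<^sup>T u\<close> as \<open>a \<cdot> \<Prod>\<^sub>k (1 - t\<^sub>k x) mod x\<^sup>n\<close>, and its value at \<open>1/t\<^sub>i\<close> isolates
  \<open>u\<^sub>i\<close>.\<close>
lemma vandermonde_transp_inv_recovers:
  assumes len: "length ts = n" and dist: "distinct ts" and nz: "0 \<notin> set ts" and u: "length u = n"
  defines "cs' \<equiv> map (\<lambda>i. 1 / (\<Prod>k\<in>{..<n} - {i}. poly (map recip_root_factor ts ! k) (1 / ts ! i))) [0..<n]"
  defines "a \<equiv> map (\<lambda>j. \<Sum>k<n. (ts ! k) ^ j * u ! k) [0..<n]"
  shows "map (\<lambda>i. poly (Poly (coeffs_upto n (Poly a * prod_polys (map recip_root_factor ts)))) (1 / ts ! i) * cs' ! i) [0..<n] = u"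
proof -
  define fs where "fs = map recip_root_factor ts"
  define G where "G = (\<Sum>i<length ts. smult (u ! i) (geom_poly n (ts ! i)))"
  have aG: "a = coeffs_upto n G"
    by (auto simp: a_def coeffs_upto_def G_def coeff_sum coeff_geom_poly len mult.commute intro!: nth_equalityI)
  have VT: "agree_below n (prod_polys fs * G) (cofactor_sum fs u)" unfolding G_def fs_def by (rule prod_times_geom_sums) (simp add: u len)
  have "agree_below n (Poly a * prod_polys fs) (G * prod_polys fs)" unfolding aG by (rule agree_below_mult[OF agree_below_truncation])
  then have "agree_below n (Poly a * prod_polys fs) (cofactor_sum fs u)" using VT by (simp add: mult.commute agree_below_trans)
  then have "coeffs_upto n (Poly a * prod_polys fs) = coeffs_upto n (cofactor_sum fs u)" by (rule coeffs_upto_agree_below)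
  moreover have "Poly (coeffs_upto (length fs) (cofactor_sum fs u)) = cofactor_sum fs u"
    by (rule Poly_coeffs_upto_cofactor_sum) (auto simp: fs_def recip_root_factor_def)
  then have "Poly (coeffs_upto n (cofactor_sum fs u)) = cofactor_sum fs u" using len by (simp add: fs_def)
  ultimately have PN: "Poly (coeffs_upto n (Poly a * prod_polys fs)) = cofactor_sum fs u" by simp
  show ?thesis
  proof (rule nth_equalityI)
    show "length (map (\<lambda>i. poly (Poly (coeffs_upto n (Poly a * prod_polys (map recip_root_factor ts)))) (1 / ts ! i) * cs' ! i) [0..<n]) = length u"
      using u by simp
    fix i assume "i < length (map (\<lambda>i. poly (Poly (coeffs_upto n (Poly a * prod_polys (map recip_root_factor ts)))) (1 / ts ! i) * cs' ! i) [0..<n])"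
    then have i: "i < n" by simp
    have ti: "ts ! i \<noteq> 0" using nz i len by (metis nth_mem)
    have "poly (cofactor_sum fs u) (1 / ts ! i) = u ! i * (\<Prod>k\<in>{..<n} - {i}. poly (fs ! k) (1 / ts ! i))"
      by (subst poly_cofactor_sum_at_root) (use i len ti in \<open>auto simp: fs_def\<close>)
    moreover have "(\<Prod>k\<in>{..<n} - {i}. poly (fs ! k) (1 / ts ! i)) \<noteq> 0"
    proof -
      have "1 - ts ! k * (1 / ts ! i) \<noteq> 0" if "k < n" "k \<noteq> i" for k
      proof
        assume "1 - ts ! k * (1 / ts ! i) = 0"
        then have "ts ! k = ts ! i" using ti by (simp add: field_simps)
        then show False using that i dist len by (simp add: nth_eq_iff_index_eq)
      qed
      then show ?thesis using len by (auto simp: fs_def)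
    qed
    ultimately show "map (\<lambda>i. poly (Poly (coeffs_upto n (Poly a * prod_polys (map recip_root_factor ts)))) (1 / ts ! i) * cs' ! i) [0..<n] ! i = u ! i"
      using i PN by (simp add: cs'_def fs_def)
  qed
qed

lemma vandermonde_costs:
  assumes len: "length ts = n" and dist: "distinct ts" and nz: "0 \<notin> set ts"
  defines "V \<equiv> vandermonde (\<lambda>i. ts ! i)"
  shows "alpha n V \<le> enat (257 * n * (ceil_log2 n + 1)^2)"
    and "alpha n (transp V) \<le> enat (33 * n * (ceil_log2 n + 1)^2 + poly_mult_cost (2 * n))"
    and "beta n V \<le> enat (n + 33 * n * (ceil_log2 n + 1)^2)"
    and "beta n (transp V) \<le> enat (poly_mult_cost (2 * n) + 257 * n * (ceil_log2 n + 1)^2 + n)"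
proof -
  show "alpha n V \<le> enat (257 * n * (ceil_log2 n + 1)^2)"
    by (rule alpha_le_if_realizable[OF realizable_vandermonde[OF len]]) (simp add: V_def vandermonde_def)
  show "alpha n (transp V) \<le> enat (33 * n * (ceil_log2 n + 1)^2 + poly_mult_cost (2 * n))"
    by (rule alpha_le_if_realizable[OF realizable_vandermonde_transp[OF len]]) (simp add: V_def vandermonde_def transp_def)
  have inv: "is_inverse n V (vandermonde_inv ts)" using is_inverse_vandermonde_inv[OF dist] len by (simp add: V_def)
  define cs where "cs = map (\<lambda>k. 1 / node_weight ts k) [0..<n]"
  show "beta n V \<le> enat (n + 33 * n * (ceil_log2 n + 1)^2)"
  proof (rule beta_le_if_realizable[OF inv realizable_vandermonde_inv[OF len]])
    show "length cs = n" by (simp add: cs_def)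
    fix xs :: "complex list" and i assume "length xs = n" "i < n"
    then show "coeffs_upto n (cofactor_sum (map root_factor ts) (map (\<lambda>i. xs ! i * cs ! i) [0..<n])) ! i = (\<Sum>j<n. vandermonde_inv ts i j * xs ! j)"
      using len by (simp add: coeff_cofactor_sum cs_def vandermonde_inv_def node_cofactor_def) (simp add: mult.commute)
  qed
  define cs' where "cs' = map (\<lambda>i. 1 / (\<Prod>k\<in>{..<n} - {i}. poly (map recip_root_factor ts ! k) (1 / ts ! i))) [0..<n]"
  define F where "F a = map (\<lambda>i. poly (Poly (coeffs_upto n (Poly a * prod_polys (map recip_root_factor ts)))) (1 / ts ! i) * cs' ! i) [0..<n]" for a
  show "beta n (transp V) \<le> enat (poly_mult_cost (2 * n) + 257 * n * (ceil_log2 n + 1)^2 + n)"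
  proof (rule beta_le_if_realizable[OF is_inverse_transp[OF inv], of _ F])
    show "realizable n n (poly_mult_cost (2 * n) + 257 * n * (ceil_log2 n + 1)^2 + n) F"
      unfolding F_def by (rule realizable_vandermonde_transp_inv[OF len]) (simp add: cs'_def)
    fix xs :: "complex list" and i assume xs: "length xs = n" and i: "i < n"
    define u where "u = map (\<lambda>i. \<Sum>j<n. vandermonde_inv ts j i * xs ! j) [0..<n]"
    have "map (\<lambda>j. \<Sum>k<n. (ts ! k) ^ j * u ! k) [0..<n] = xs"
      using is_inverse_apply[OF is_inverse_transp[OF inv] xs]
      by (simp add: u_def V_def vandermonde_def transp_def)
    then have "F xs = u" unfolding F_def cs'_def using vandermonde_transp_inv_recovers[OF len dist nz, of u] by (simp add: u_def)
    then show "F xs ! i = (\<Sum>j<n. transp (vandermonde_inv ts) i j * xs ! j)" using i by (simp add: u_def transp_def)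
  qed
qed

lemma vandermonde_cost_sums:
  assumes len: "length ts = n" and dist: "distinct ts" and nz: "0 \<notin> set ts" and n1: "1 \<le> n"
  defines "V \<equiv> vandermonde (\<lambda>i. ts ! i)"
  shows "alpha n V + alpha n (transp V) \<le> enat (356 * n * (ceil_log2 n + 1)^2)"
    and "beta n V + beta n (transp V) \<le> enat (356 * n * (ceil_log2 n + 1)^2)"
proof -
  note costs = vandermonde_costs[OF len dist nz, folded V_def]
  define X where "X = (ceil_log2 n + 1)^2"
  have X1: "ceil_log2 n + 1 \<le> X" by (simp add: X_def power2_eq_square)
  have "poly_mult_cost (2 * n) \<le> 64 * n * X"
    using poly_mult_cost_double[OF n1] X1 by (meson le_trans mult_le_mono2)
  moreover have "n \<le> n * X" using X1 by simp
  ultimately have "257 * n * X + (33 * n * X + poly_mult_cost (2 * n)) \<le> 356 * n * X"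
    and "n + 33 * n * X + (poly_mult_cost (2 * n) + 257 * n * X + n) \<le> 356 * n * X"
    by linarith+
  then show "alpha n V + alpha n (transp V) \<le> enat (356 * n * (ceil_log2 n + 1)^2)"
    and "beta n V + beta n (transp V) \<le> enat (356 * n * (ceil_log2 n + 1)^2)"
    using add_mono[OF costs(1,2)] add_mono[OF costs(3,4)] unfolding X_def
    by (auto elim!: order_trans)
qed

section \<open>Perturbation and the asymptotic bound\<close>

lemma exists_close_avoiding:
  assumes d: "0 < d" and F: "finite F"
  shows "\<exists>z::complex. cmod (z - z0) < d \<and> z \<notin> F"
proof -
  define g where "g k = z0 + of_real (d / (real k + 2))" for k :: nat
  have "inj g"
  proof (rule injI)
    fix a b assume "g a = g b"
    then have "d / (real a + 2) = d / (real b + 2)" by (simp add: g_def)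
    then have "real a + 2 = real b + 2" using d by (simp add: divide_cancel_left)
    then show "a = b" by simp
  qed
  then have "finite (g -` F)" using F by (rule finite_vimageI[rotated])
  then obtain k where k: "k \<notin> g -` F" using ex_new_if_finite[OF infinite_UNIV_nat] by blast
  have "cmod (g k - z0) = \<bar>d / (real k + 2)\<bar>" unfolding g_def by (simp only: add_diff_cancel_left' norm_of_real)
  also have "\<dots> = d / (real k + 2)" using d by simp
  also have "\<dots> < d / 1" by (rule divide_strict_left_mono) (use d in auto)
  finally show ?thesis using k by auto
qed

lemma powers_close:
  assumes e: "0 < e"
  shows "\<exists>d>0. \<forall>z::complex. cmod (z - z0) < d \<longrightarrow> (\<forall>j<n. cmod (z ^ j - z0 ^ j) \<le> e)"
proof (induction n)
  case 0 then show ?case by (intro exI[of _ 1]) auto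
next
  case (Suc n)
  then obtain d1 where d1: "d1 > 0" "\<forall>z. cmod (z - z0) < d1 \<longrightarrow> (\<forall>j<n. cmod (z ^ j - z0 ^ j) \<le> e)" by blast
  have "isCont (\<lambda>z::complex. z ^ n) z0" by (intro continuous_intros)
  then have "(\<lambda>z::complex. z ^ n) \<midarrow>z0\<rightarrow> z0 ^ n" by (simp add: isCont_def)
  then obtain d2 where d2: "d2 > 0" "\<forall>z. z \<noteq> z0 \<and> norm (z - z0) < d2 \<longrightarrow> norm (z ^ n - z0 ^ n) < e"
    using e unfolding LIM_eq by blast
  show ?case
  proof (intro exI[of _ "min d1 d2"] conjI allI impI)
    show "0 < min d1 d2" using d1 d2 by simp
    fix z :: complex and j assume z: "cmod (z - z0) < min d1 d2" and j: "j < Suc n"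
    show "cmod (z ^ j - z0 ^ j) \<le> e"
    proof (cases "j < n")
      case True then show ?thesis using d1 z by simp
    next
      case False
      then have "j = n" using j by simp
      then show ?thesis using d2 z e by (cases "z = z0") (auto intro: less_imp_le)
    qed
  qed
qed

lemma perturb_nodes:
  assumes e: "0 < e"
  shows "\<exists>ts. length ts = n \<and> distinct ts \<and> 0 \<notin> set ts \<and>
     (\<forall>i<n. \<forall>j<n. cmod ((ts ! i) ^ j - s i ^ j) \<le> e)"
proof -
  have "m \<le> n \<Longrightarrow> \<exists>ts. length ts = m \<and> distinct ts \<and> 0 \<notin> set ts \<and>
     (\<forall>i<m. \<forall>j<n. cmod ((ts ! i) ^ j - s i ^ j) \<le> e)" for m
  proof (induction m)
    case 0 then show ?case by auto
  next
    case (Suc m)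
    then obtain ts where ts: "length ts = m" "distinct ts" "0 \<notin> set ts"
      "\<forall>i<m. \<forall>j<n. cmod ((ts ! i) ^ j - s i ^ j) \<le> e" by auto
    obtain d where d: "d > 0" "\<forall>z. cmod (z - s m) < d \<longrightarrow> (\<forall>j<n. cmod (z ^ j - s m ^ j) \<le> e)"
      using powers_close[OF e] by blast
    obtain z where z: "cmod (z - s m) < d" "z \<notin> insert 0 (set ts)" using exists_close_avoiding[OF d(1), of "insert 0 (set ts)"] by auto
    show ?case
    proof (intro exI[of _ "ts @ [z]"] conjI allI impI)
      fix i j assume i: "i < Suc m" and j: "j < n"
      show "cmod (((ts @ [z]) ! i) ^ j - s i ^ j) \<le> e"
      proof (cases "i < m")
        case True then show ?thesis using ts(1,4) j by (simp add: nth_append)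
      next
        case False then have "i = m" using i by simp
        then show ?thesis using ts(1) d z j by (simp add: nth_append)
      qed
    qed (use ts z in auto)
  qed
  then show ?thesis by blast
qed

lemma alpha_eps_le_perturbed:
  "\<forall>i<n. \<forall>j<n. cmod (E i j) \<le> e \<Longrightarrow> alpha_eps n e M \<le> alpha n (mat_add M E)"
  unfolding alpha_eps_def by (intro Inf_lower) blast

lemma beta_eps_le_perturbed:
  "\<forall>i<n. \<forall>j<n. cmod (E i j) \<le> e \<Longrightarrow> beta_eps n e M \<le> beta n (mat_add M E)"
  unfolding beta_eps_def by (intro Inf_lower) blast

lemma vandermonde_eps_costs:
  fixes s :: "nat \<Rightarrow> complex"
  assumes e: "0 < e" and n1: "1 \<le> n"
  defines "V \<equiv> vandermonde s"
  shows "alpha_eps n e V + alpha_eps n e (transp V) \<le> enat (356 * n * (ceil_log2 n + 1)^2)"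
    and "beta_eps n e V + beta_eps n e (transp V) \<le> enat (356 * n * (ceil_log2 n + 1)^2)"
proof -
  obtain ts where ts: "length ts = n" "distinct ts" "0 \<notin> set ts"
    "\<forall>i<n. \<forall>j<n. cmod ((ts ! i) ^ j - s i ^ j) \<le> e" using perturb_nodes[OF e] by blast
  define E where "E i j = (ts ! i) ^ j - s i ^ j" for i j
  have E: "\<forall>i<n. \<forall>j<n. cmod (E i j) \<le> e" "\<forall>i<n. \<forall>j<n. cmod (transp E i j) \<le> e"
    using ts(4) by (simp_all add: E_def transp_def)
  have "mat_add V E = vandermonde (\<lambda>i. ts ! i)"
    and "mat_add (transp V) (transp E) = transp (vandermonde (\<lambda>i. ts ! i))"
    by (auto simp: mat_add_def V_def E_def vandermonde_def transp_def)
  note perturbed = alpha_eps_le_perturbed[OF E(1), of V] alpha_eps_le_perturbed[OF E(2), of "transp V"]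
    beta_eps_le_perturbed[OF E(1), of V] beta_eps_le_perturbed[OF E(2), of "transp V"]
  note sums = vandermonde_cost_sums[OF ts(1-3) n1]
  show "alpha_eps n e V + alpha_eps n e (transp V) \<le> enat (356 * n * (ceil_log2 n + 1)^2)"
    using add_mono[OF perturbed(1,2)] sums(1) by (simp add: \<open>mat_add V E = _\<close> \<open>mat_add (transp V) _ = _\<close>)
  show "beta_eps n e V + beta_eps n e (transp V) \<le> enat (356 * n * (ceil_log2 n + 1)^2)"
    using add_mono[OF perturbed(3,4)] sums(2) by (simp add: \<open>mat_add V E = _\<close> \<open>mat_add (transp V) _ = _\<close>)
qed

lemma s_plus_nonneg: "1 \<le> n \<Longrightarrow> 0 \<le> s_plus n s"
proof -
  assume n: "1 \<le> n"
  have eq: "{cmod (s i) | i. i < n} = (\<lambda>i. cmod (s i)) ` {..<n}" by auto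
  have "cmod (s 0) \<le> s_plus n s" unfolding s_plus_def eq using n by (intro Max_ge) auto
  then show ?thesis using norm_ge_zero order_trans by blast
qed

lemma ln_2_ge_half: "1 / 2 \<le> ln (2::real)"
proof -
  have "exp (1 / 2 :: real) * exp (1 / 2) = exp 1" by (simp flip: exp_add)
  also have "\<dots> \<le> 3" by (rule exp_le)
  finally have h: "exp (1 / 2 :: real) * exp (1 / 2) \<le> 3" .
  have "exp (1 / 2 :: real) \<le> 2"
  proof (rule ccontr)
    assume "\<not> exp (1 / 2 :: real) \<le> 2"
    then have "2 < exp (1 / 2 :: real)" by simp
    then have "2 * 2 < exp (1 / 2 :: real) * exp (1 / 2)" by (intro mult_strict_mono) auto
    then show False using h by simp
  qed
  then show ?thesis by (subst ln_ge_iff) auto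
qed

lemma ceil_log2_le_ln: "3 \<le> n \<Longrightarrow> real (ceil_log2 n) + 1 \<le> 4 * ln (real n)"
proof -
  assume n: "3 \<le> n"
  have ln1: "1 \<le> ln (real n)"
  proof -
    have "exp 1 \<le> real n" using exp_le n by linarith
    then show ?thesis by (subst ln_ge_iff) (use n in auto)
  qed
  show ?thesis
  proof (cases "ceil_log2 n = 0")
    case True then show ?thesis using ln1 by simp
  next
    case False
    then have "2 ^ (ceil_log2 n - 1) < n" by (intro power_pred_ceil_log2_less) simp
    then have "real (2 ^ (ceil_log2 n - 1)) < real n" by linarith
    then have "ln (2 ^ (ceil_log2 n - 1)) < ln (real n)" by (simp del: of_nat_power add: ln_less_cancel_iff)
    then have "real (ceil_log2 n - 1) * ln 2 < ln (real n)" by (simp add: ln_realpow)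
    moreover have "real (ceil_log2 n - 1) * (1 / 2) \<le> real (ceil_log2 n - 1) * ln 2"
      using ln_2_ge_half by (intro mult_left_mono) auto
    ultimately have "real (ceil_log2 n - 1) * (1 / 2) < ln (real n)" by linarith
    then have "real (ceil_log2 n) - 1 \<le> 2 * ln (real n)" using False by (simp add: of_nat_diff)
    then show ?thesis using ln1 by linarith
  qed
qed

lemma cost_bound_le_rho:
  fixes n :: nat and \<rho> :: real
  assumes n: "3 \<le> n" and rho: "ln (real n) \<le> \<rho>"
  shows "356 * n * (ceil_log2 n + 1)^2 \<le> nat \<lceil>6000 * real n * \<rho> * ln (real n)\<rceil>"
    and "356 * n * (ceil_log2 n + 1)^2 \<le> nat \<lceil>6000 * real n * \<rho>\<^sup>2 * ln (real n)\<rceil>"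
proof -
  have ln1: "1 \<le> ln (real n)"
    using exp_le n by (subst ln_ge_iff) auto
  have "(real (ceil_log2 n) + 1)^2 \<le> (4 * ln (real n))^2"
    using ceil_log2_le_ln[OF n] by (intro power_mono) auto
  then have "(real (ceil_log2 n) + 1)^2 \<le> 16 * (ln (real n))^2" by (simp add: power_mult_distrib)
  then have "356 * real n * (real (ceil_log2 n) + 1)^2 \<le> 356 * real n * (16 * (ln (real n))^2)"
    by (intro mult_left_mono) auto
  then have "real (356 * n * (ceil_log2 n + 1)^2) \<le> 356 * real n * (16 * (ln (real n))^2)"
    by (simp add: add.commute)
  also have "\<dots> \<le> 6000 * real n * (ln (real n) * ln (real n))"
    using ln1 by (simp add: power2_eq_square)
  finally have base: "real (356 * n * (ceil_log2 n + 1)^2) \<le> 6000 * real n * (ln (real n) * ln (real n))" .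
  have r1: "ln (real n) * ln (real n) \<le> \<rho> * ln (real n)"
    using rho ln1 by (intro mult_right_mono) auto
  also have "\<dots> \<le> \<rho>\<^sup>2 * ln (real n)"
    using rho ln1 by (intro mult_right_mono) (auto simp: power2_eq_square)
  finally have r2: "ln (real n) * ln (real n) \<le> \<rho>\<^sup>2 * ln (real n)" .
  have "real (356 * n * (ceil_log2 n + 1)^2) \<le> 6000 * real n * \<rho> * ln (real n)"
    using base mult_left_mono[OF r1, of "6000 * real n"] by (simp add: mult_ac)
  then show "356 * n * (ceil_log2 n + 1)^2 \<le> nat \<lceil>6000 * real n * \<rho> * ln (real n)\<rceil>"
    by (meson of_nat_le_iff order_trans real_nat_ceiling_ge)
  have "real (356 * n * (ceil_log2 n + 1)^2) \<le> 6000 * real n * \<rho>\<^sup>2 * ln (real n)"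
    using base mult_left_mono[OF r2, of "6000 * real n"] by (simp add: mult_ac)
  then show "356 * n * (ceil_log2 n + 1)^2 \<le> nat \<lceil>6000 * real n * \<rho>\<^sup>2 * ln (real n)\<rceil>"
    by (meson of_nat_le_iff order_trans real_nat_ceiling_ge)
qed

theorem theorem9p4:
  fixes \<epsilon> :: "nat \<Rightarrow> real"
  assumes eps_pos: "\<And>n. 0 < \<epsilon> n" and eps_lt1: "\<And>n. \<epsilon> n < 1"
    and eps_log: "(\<lambda>n. ln (1 / \<epsilon> n)) \<in> O(\<lambda>n. ln (real n))"
  shows "\<exists>C::real. \<forall>\<^sub>F n in sequentially. \<forall>s :: nat \<Rightarrow> complex.
      (let \<rho> = ln (real n / \<epsilon> n); e = (s_plus n s + 1) * \<epsilon> n; V = vandermonde s in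
        alpha_eps n e V + alpha_eps n e (transp V) \<le> enat (nat \<lceil>C * real n * \<rho> * ln (real n)\<rceil>) \<and>
        beta_eps n e V + beta_eps n e (transp V) \<le> enat (nat \<lceil>C * real n * \<rho>\<^sup>2 * ln (real n)\<rceil>))"
proof (intro exI[of _ 6000] eventually_sequentiallyI[of 3] allI)
  fix n :: nat and s :: "nat \<Rightarrow> complex"
  assume n: "3 \<le> n"
  have e: "0 < (s_plus n s + 1) * \<epsilon> n"
    using s_plus_nonneg[of n s] n eps_pos[of n] by (intro mult_pos_pos) auto
  have "real n \<le> real n / \<epsilon> n" using eps_pos[of n] eps_lt1[of n] n by (simp add: le_divide_eq)
  then have rho: "ln (real n) \<le> ln (real n / \<epsilon> n)" using n eps_pos[of n] by simp
  note costs = vandermonde_eps_costs[OF e, of n s] and bounds = cost_bound_le_rho[OF n rho]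
  show "let \<rho> = ln (real n / \<epsilon> n); e = (s_plus n s + 1) * \<epsilon> n; V = vandermonde s in
        alpha_eps n e V + alpha_eps n e (transp V) \<le> enat (nat \<lceil>6000 * real n * \<rho> * ln (real n)\<rceil>) \<and>
        beta_eps n e V + beta_eps n e (transp V) \<le> enat (nat \<lceil>6000 * real n * \<rho>\<^sup>2 * ln (real n)\<rceil>)"
    unfolding Let_def using costs bounds n by (auto elim!: order_trans)
qed

end
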